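(* Let $R$ be a noncommutative division algebra over a field $F$. Then for every positive integer $n$ there exist elements $\alpha,\beta\in R$ such that $(\alpha\beta)^n\neq(\beta\alpha)^n$. *)

theory Defs
  imports Main
begin

definition algebra_over :: "('f::field \<Rightarrow> 'a::ring_1 \<Rightarrow> 'a) \<Rightarrow> bool" where
  "algebra_over smul \<longleftrightarrow>
     (\<forall>c x y. smul c (x + y) = smul c x + smul c y) \<and>
     (\<forall>c d x. smul (c + d) x = smul c x + smul d x) \<and>
     (\<forall>c d x. smul (c * d) x = smul c (smul d x)) \<and>
     (\<forall>x. smul 1 x = x) \<and>
     (\<forall>c x y. smul c x * y = smul c (x * y)) \<and>
     (\<forall>c x y. x * smul c y = smul c (x * y))"

end

theory Submission
  imports Defs "HOL-Computational_Algebra.Fundamental_Theorem_Algebra" "HOL-Computational_Algebra.Primes"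
    "HOL-Algebra.FiniteProduct"
begin

text \<open>
  If \<open>(\<alpha>\<beta>)\<^sup>n = (\<beta>\<alpha>)\<^sup>n\<close> for all \<open>\<alpha>, \<beta>\<close>, then \<open>\<alpha> = x y\<^sup>-\<^sup>1, \<beta> = y\<close> gives
  \<open>x\<^sup>n = y x\<^sup>n y\<^sup>-\<^sup>1\<close>: all \<open>n\<close>-th powers are central, and it suffices to show that a division ring
  with central \<open>n\<close>-th powers is commutative.

  If the centre \<open>Z\<close> is infinite, write \<open>n = q m\<close> with \<open>q\<close> a power of the characteristic and
  \<open>m\<close> invertible. The commutator of \<open>(x + c)\<^sup>n = (x\<^sup>q + c\<^sup>q)\<^sup>m\<close> with \<open>y\<close> is a polynomial in
  \<open>c\<^sup>q\<close> vanishing on the infinite set \<open>{c\<^sup>q. c \<in> Z}\<close>, so its coefficient \<open>m [x\<^sup>q, y]\<close> is zero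
  and \<open>x\<^sup>q\<close> is central. For \<open>q > 1\<close> this makes every derivation \<open>ad a\<close> nilpotent, since
  \<open>(ad a)\<^sup>q = ad (a\<^sup>q)\<close>, which is impossible for noncentral \<open>a\<close>.

  If \<open>Z\<close> is finite, all nonzero elements are roots of unity of one fixed order. For
  noncommuting \<open>a, b\<close> the field \<open>K = Z[a]\<close> is finite and \<open>(ad a)\<^bsup>|K|\<^esup> = ad a\<close>, so \<open>ad a\<close> has an
  eigenvector \<open>e\<close> with nonzero eigenvalue in \<open>K\<close>. Conjugation by \<open>e\<close> preserves \<open>K\<close>, hence \<open>K[e]\<close> is
  a finite noncommutative division ring, contradicting Wedderburn's little theorem.
\<close>

section \<open>Division subrings and their left modules\<close>

lemma nonzero_inverse_mult_cancel_left [simp]: "h \<noteq> 0 \<Longrightarrow> inverse h * (h * z) = (z::'a::division_ring)"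
  by (simp add: mult.assoc[symmetric])

lemma nonzero_mult_inverse_cancel_left [simp]: "h \<noteq> 0 \<Longrightarrow> h * (inverse h * z) = (z::'a::division_ring)"
  by (simp add: mult.assoc[symmetric])

locale division_subring =
  fixes S :: "'a::division_ring set"
  assumes zero_closed [simp]: "0 \<in> S" and one_closed [simp]: "1 \<in> S"
    and add_closed: "x \<in> S \<Longrightarrow> y \<in> S \<Longrightarrow> x + y \<in> S"
    and mult_closed: "x \<in> S \<Longrightarrow> y \<in> S \<Longrightarrow> x * y \<in> S"
    and uminus_closed: "x \<in> S \<Longrightarrow> - x \<in> S"
    and inverse_closed: "x \<in> S \<Longrightarrow> inverse x \<in> S"
begin

lemma diff_closed: "x \<in> S \<Longrightarrow> y \<in> S \<Longrightarrow> x - y \<in> S"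
  using add_closed[OF _ uminus_closed, of x y] by simp

lemma power_closed: "x \<in> S \<Longrightarrow> x ^ k \<in> S"
  by (induction k) (simp_all add: mult_closed)

lemma card_ge_2: "finite S \<Longrightarrow> 2 \<le> card S"
  using card_mono[of S "{0, 1}"] by simp

lemma power_card_minus_1_eq_1:
  assumes fin: "finite S" and comm: "\<And>x y. x \<in> S \<Longrightarrow> y \<in> S \<Longrightarrow> x * y = y * x"
    and x: "x \<in> S" "x \<noteq> 0"
  shows "x ^ (card S - 1) = 1"
proof -
  define G where "G = \<lparr>carrier = S - {0}, monoid.mult = (*), one = (1::'a)\<rparr>"
  have G: "comm_group G"
  proof (rule comm_groupI)
    fix y z assume "y \<in> carrier G" "z \<in> carrier G"
    then show "y \<otimes>\<^bsub>G\<^esub> z \<in> carrier G" "y \<otimes>\<^bsub>G\<^esub> z = z \<otimes>\<^bsub>G\<^esub> y"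
      by (simp_all add: G_def mult_closed comm)
  next
    fix y assume "y \<in> carrier G"
    then show "\<exists>z\<in>carrier G. z \<otimes>\<^bsub>G\<^esub> y = \<one>\<^bsub>G\<^esub>"
      by (intro bexI[of _ "inverse y"]) (simp_all add: G_def inverse_closed)
  qed (simp_all add: G_def mult.assoc)
  have pow: "y [^]\<^bsub>G\<^esub> (k::nat) = y ^ k" for y k
    by (induction k) (simp_all add: G_def power_commutes)
  have "x [^]\<^bsub>G\<^esub> card (carrier G) = \<one>\<^bsub>G\<^esub>"
    by (rule comm_group.power_order_eq_one[OF G]) (use fin x in \<open>simp_all add: G_def\<close>)
  then show ?thesis using fin unfolding pow by (simp add: G_def card_Diff_singleton)
qed

lemma power_card_eq_self:
  assumes fin: "finite S" and comm: "\<And>x y. x \<in> S \<Longrightarrow> y \<in> S \<Longrightarrow> x * y = y * x"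
    and x: "x \<in> S"
  shows "x ^ card S = x"
proof (cases "x = 0")
  case False
  have "card S = Suc (card S - 1)" using card_ge_2[OF fin] by simp
  then have "x ^ card S = x * x ^ (card S - 1)" by (metis power_Suc)
  then show ?thesis using power_card_minus_1_eq_1[OF fin comm x False] by simp
qed (use card_ge_2[OF fin] in simp)

end

locale left_module =
  fixes K M :: "'a::division_ring set"
  assumes zero_closed [simp]: "0 \<in> M"
    and add_closed: "x \<in> M \<Longrightarrow> y \<in> M \<Longrightarrow> x + y \<in> M"
    and smult_closed: "k \<in> K \<Longrightarrow> x \<in> M \<Longrightarrow> k * x \<in> M"

lemma (in division_subring) left_module_superring:
  assumes "division_subring T" "S \<subseteq> T"
  shows "left_module S T"
proof -
  interpret T: division_subring T by fact
  show ?thesis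
  proof unfold_locales
    fix k x assume "k \<in> S" "x \<in> T"
    then show "k * x \<in> T" using assms(2) by (blast intro: T.mult_closed)
  qed (simp_all add: T.add_closed)
qed

lemma inj_on_left_module_extend:
  assumes K: "division_subring K" and M: "left_module K M" and v: "v \<notin> M"
  shows "inj_on (\<lambda>(k, m). k * v + m) (K \<times> M)"
proof (rule inj_onI, clarify, rule ccontr)
  interpret K: division_subring K by (fact K)
  interpret M: left_module K M by (fact M)
  fix k m k' m' assume km: "k \<in> K" "m \<in> M" "k' \<in> K" "m' \<in> M" "k * v + m = k' * v + m'"
    and "\<not> (k = k' \<and> m = m')"
  then have "k \<noteq> k'" by auto
  have "v = inverse (k - k') * ((k - k') * v)"
    using \<open>k \<noteq> k'\<close> by (simp add: mult.assoc[symmetric])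
  moreover have "(k - k') * v = m' + (- 1) * m" using km(5) by (simp add: algebra_simps)
  moreover have "inverse (k - k') * (m' + (- 1) * m) \<in> M"
    using km by (intro M.smult_closed M.add_closed K.inverse_closed K.diff_closed K.uminus_closed) auto
  ultimately show False using v by metis
qed

lemma left_module_extend:
  assumes K: "division_subring K" and M: "left_module K M" and v: "v \<notin> M"
  defines "M' \<equiv> (\<lambda>(k, m). k * v + m) ` (K \<times> M)"
  shows "left_module K M'" "M \<subseteq> M'" "card M' = card K * card M"
proof -
  interpret K: division_subring K by (fact K)
  interpret M: left_module K M by (fact M)
  show "left_module K M'"
  proof
    show "0 \<in> M'" unfolding M'_def by (intro image_eqI[of _ _ "(0, 0)"]) auto
  next
    fix x y assume "x \<in> M'" "y \<in> M'"
    then obtain k m k' m' where "k \<in> K" "m \<in> M" "k' \<in> K" "m' \<in> M" "x = k * v + m" "y = k' * v + m'"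
      unfolding M'_def by auto
    moreover have "k * v + m + (k' * v + m') = (k + k') * v + (m + m')" by (simp add: algebra_simps)
    ultimately show "x + y \<in> M'" unfolding M'_def
      by (intro image_eqI[of _ _ "(k + k', m + m')"]) (auto intro: K.add_closed M.add_closed)
  next
    fix c x assume "c \<in> K" "x \<in> M'"
    then obtain k m where "k \<in> K" "m \<in> M" "x = k * v + m" unfolding M'_def by auto
    moreover have "c * (k * v + m) = (c * k) * v + c * m" by (simp add: algebra_simps)
    ultimately show "c * x \<in> M'" unfolding M'_def using \<open>c \<in> K\<close>
      by (intro image_eqI[of _ _ "(c * k, c * m)"]) (auto intro: K.mult_closed M.smult_closed)
  qed
  show "M \<subseteq> M'"
  proof
    fix m assume "m \<in> M"
    then show "m \<in> M'" unfolding M'_def by (intro image_eqI[of _ _ "(0, m)"]) auto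
  qed
  show "card M' = card K * card M"
    using inj_on_left_module_extend[OF K M v] unfolding M'_def
    by (simp add: card_image card_cartesian_product)
qed

theorem card_left_module_eq_power:
  assumes K: "division_subring K" "finite K" and L: "left_module K L" "finite L"
  shows "\<exists>d. card L = card K ^ d"
proof -
  have grow: "\<exists>d. card L = card K ^ d"
    if "left_module K M" "M \<subseteq> L" "card M = card K ^ d" for M d
    using that
  proof (induction "card L - card M" arbitrary: M d rule: less_induct)
    case (less M)
    show ?case
    proof (cases "M = L")
      case True
      with less.prems show ?thesis by blast
    next
      case False
      then obtain v where v: "v \<in> L" "v \<notin> M" using less.prems(2) by blast
      define M' where "M' = (\<lambda>(k, m). k * v + m) ` (K \<times> M)"
      have finM: "finite M" using less.prems(2) L(2) finite_subset by blast
      have M': "left_module K M'" "M \<subseteq> M'" "card M' = card K * card M"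
        using left_module_extend[OF K(1) less.prems(1) v(2)] unfolding M'_def by auto
      have "M' \<subseteq> L"
        using less.prems(2) v(1) left_module.smult_closed[OF L(1)] left_module.add_closed[OF L(1)]
        by (auto simp: M'_def)
      have "card M > 0" using finM left_module.zero_closed[OF less.prems(1)] card_gt_0_iff by blast
      then have "card M < card M'" using M'(3) division_subring.card_ge_2[OF K] by simp
      moreover have "card M' \<le> card L" using \<open>M' \<subseteq> L\<close> L(2) by (rule card_mono[rotated])
      ultimately have "card L - card M' < card L - card M" by simp
      moreover have "card M' = card K ^ Suc d" using M'(3) less.prems(3) by simp
      ultimately show ?thesis using less.hyps M'(1) \<open>M' \<subseteq> L\<close> by blast
    qed
  qed
  have "left_module K {0}" by unfold_locales auto
  moreover have "{0} \<subseteq> L" using left_module.zero_closed[OF L(1)] by simp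
  moreover have "card {0::'a} = card K ^ 0" by simp
  ultimately show ?thesis by (rule grow)
qed

section \<open>Cyclotomic polynomials\<close>

definition prim_roots_unity :: "nat \<Rightarrow> complex set" where
  "prim_roots_unity d = {z. z ^ d = 1 \<and> (\<forall>k. 0 < k \<and> k < d \<longrightarrow> z ^ k \<noteq> 1)}"

definition cyclotomic :: "nat \<Rightarrow> complex poly" where
  "cyclotomic d = (\<Prod>z\<in>prim_roots_unity d. [:-z, 1:])"

lemma finite_prim_roots_unity: "0 < d \<Longrightarrow> finite (prim_roots_unity d)"
  by (rule finite_subset[OF _ finite_roots_unity[of d]]) (auto simp: prim_roots_unity_def)

lemma prim_roots_unity_disjoint:
  assumes "d \<noteq> e" "0 < d" "0 < e"
  shows "prim_roots_unity d \<inter> prim_roots_unity e = {}"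
  using assms by (cases "d < e") (auto simp: prim_roots_unity_def)

lemma roots_unity_eq_UN_prim_roots_unity:
  assumes m: "0 < m"
  shows "{z. z ^ m = 1} = (\<Union>d\<in>{d. d dvd m}. prim_roots_unity d)"
proof (intro equalityI subsetI)
  fix z :: complex assume "z \<in> {z. z ^ m = 1}"
  then have zm: "z ^ m = 1" by simp
  define d where "d = (LEAST k. 0 < k \<and> z ^ k = 1)"
  have d: "0 < d \<and> z ^ d = 1" unfolding d_def by (rule LeastI[of _ m]) (simp add: m zm)
  have d_least: "d \<le> k" if "0 < k" "z ^ k = 1" for k
    unfolding d_def by (rule Least_le) (use that in simp)
  have "z ^ m = z ^ (d * (m div d) + m mod d)" by simp
  also have "\<dots> = (z ^ d) ^ (m div d) * z ^ (m mod d)" by (simp only: power_add power_mult)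
  finally have "z ^ (m mod d) = 1" using zm d by simp
  moreover have "m mod d < d" using d by simp
  ultimately have "m mod d = 0" using d_least by (meson not_le neq0_conv)
  moreover have "z \<in> prim_roots_unity d"
    using d by (auto simp: prim_roots_unity_def dest: d_least)
  ultimately show "z \<in> (\<Union>d\<in>{d. d dvd m}. prim_roots_unity d)" by (auto simp: mod_eq_0_iff_dvd)
next
  fix z assume "z \<in> (\<Union>d\<in>{d. d dvd m}. prim_roots_unity d)"
  then obtain d k where "m = d * k" "z ^ d = 1" by (auto simp: prim_roots_unity_def)
  then show "z \<in> {z. z ^ m = 1}" by (simp add: power_mult)
qed

lemma monom_minus_1_eq_prod_roots_unity:
  assumes m: "0 < m"
  shows "monom 1 m - 1 = (\<Prod>z\<in>{z::complex. z ^ m = 1}. [:-z, 1:])"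
proof -
  let ?p = "monom 1 m - 1 :: complex poly"
  have poly_p: "poly ?p z = z ^ m - 1" for z by (simp add: poly_monom)
  have "degree ?p = m"
  proof -
    have "?p = monom 1 m + (- 1)" by simp
    also have "degree \<dots> = m"
      using m by (subst degree_add_eq_left) (simp_all add: degree_monom_eq)
    finally show ?thesis .
  qed
  then have lc: "lead_coeff ?p = 1" using m by simp
  have "rsquarefree ?p"
  proof (subst rsquarefree_roots, intro allI notI)
    fix z assume z: "poly ?p z = 0 \<and> poly (pderiv ?p) z = 0"
    have "pderiv ?p = monom (of_nat m) (m - 1)"
      by (simp add: pderiv_diff pderiv_monom)
    then have "of_nat m * z ^ (m - 1) = 0" using z by (simp add: poly_monom)
    then have "z = 0" using m by simp
    then show False using z m by (simp add: poly_monom power_0_left)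
  qed
  then have "smult (lead_coeff ?p) (\<Prod>z|poly ?p z = 0. [:-z, 1:]) = ?p"
    by (rule complex_poly_decompose_rsquarefree)
  then have "(\<Prod>z|z ^ m = 1. [:-z, 1:]) = ?p" unfolding lc poly_p by simp
  then show ?thesis by (rule sym)
qed

lemma prod_cyclotomic:
  assumes m: "0 < m"
  shows "(\<Prod>d\<in>{d. d dvd m}. cyclotomic d) = monom 1 m - 1"
proof -
  have pos: "0 < d" if "d dvd m" for d using that m by (auto intro: Nat.gr0I)
  have "(\<Prod>d\<in>{d. d dvd m}. cyclotomic d) = (\<Prod>z\<in>(\<Union>d\<in>{d. d dvd m}. prim_roots_unity d). [:-z, 1:])"
    unfolding cyclotomic_def
  proof (intro prod.UNION_disjoint[symmetric] ballI impI)
    show "finite {d. d dvd m}" using m by simp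
    show "finite (prim_roots_unity d)" if "d \<in> {d. d dvd m}" for d
      using that pos by (simp add: finite_prim_roots_unity)
    show "prim_roots_unity d \<inter> prim_roots_unity e = {}"
      if "d \<in> {d. d dvd m}" "e \<in> {d. d dvd m}" "d \<noteq> e" for d e
      using that pos by (simp add: prim_roots_unity_disjoint)
  qed
  also have "\<dots> = monom 1 m - 1"
    unfolding roots_unity_eq_UN_prim_roots_unity[OF m, symmetric]
    by (rule monom_minus_1_eq_prod_roots_unity[OF m, symmetric])
  finally show ?thesis .
qed

lemma lead_coeff_cyclotomic: "lead_coeff (cyclotomic d) = 1"
  unfolding cyclotomic_def lead_coeff_prod by simp

definition integral_poly :: "complex poly \<Rightarrow> bool" where
  "integral_poly p \<longleftrightarrow> (\<forall>i. coeff p i \<in> \<int>)"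

lemma integral_poly_mult: "integral_poly p \<Longrightarrow> integral_poly q \<Longrightarrow> integral_poly (p * q)"
  unfolding integral_poly_def coeff_mult by (auto intro!: Ints_sum Ints_mult)

lemma integral_poly_diff: "integral_poly p \<Longrightarrow> integral_poly q \<Longrightarrow> integral_poly (p - q)"
  unfolding integral_poly_def by (auto intro!: Ints_diff)

lemma integral_poly_monom: "c \<in> \<int> \<Longrightarrow> integral_poly (monom c k)"
  unfolding integral_poly_def by auto

lemma integral_poly_prod: "(\<And>x. x \<in> A \<Longrightarrow> integral_poly (f x)) \<Longrightarrow> integral_poly (\<Prod>x\<in>A. f x)"
proof (induction A rule: infinite_finite_induct)
  case (insert x A)
  then show ?case by (simp add: integral_poly_mult)
qed (simp_all add: integral_poly_def)

lemma poly_integral_poly_Ints: "integral_poly p \<Longrightarrow> x \<in> \<int> \<Longrightarrow> poly p x \<in> \<int>"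
  unfolding poly_altdef integral_poly_def by (auto intro!: Ints_sum Ints_mult Ints_power)

lemma integral_poly_cancel_monic:
  assumes G: "integral_poly G" "lead_coeff G = 1" and GH: "integral_poly (G * H)"
  shows "integral_poly H"
  using GH
proof (induction "degree H" arbitrary: H rule: less_induct)
  case less
  define c where "c = lead_coeff H"
  define H' where "H' = H - monom c (degree H)"
  have "coeff (G * H) (degree G + degree H) = c"
    using G(2) by (simp add: coeff_mult_degree_sum c_def)
  then have c: "c \<in> \<int>" using less.prems by (metis integral_poly_def)
  have "integral_poly H'"
  proof (cases "degree H = 0")
    case True
    then have "H' = 0" by (simp add: H'_def c_def monom_0 degree_0_id)
    then show ?thesis by (simp add: integral_poly_def)
  next
    case False
    have "degree H' < degree H"
      using False by (intro degree_lessI) (auto simp: H'_def c_def coeff_eq_0 le_less)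
    moreover have "integral_poly (G * H')"
      unfolding H'_def right_diff_distrib using G(1) c
      by (intro integral_poly_diff[OF less.prems] integral_poly_mult integral_poly_monom)
    ultimately show ?thesis by (rule less.hyps)
  qed
  then have "integral_poly (H' + monom c (degree H))"
    using c by (simp add: integral_poly_def Ints_add)
  then show ?case unfolding H'_def by simp
qed

lemma integral_poly_cyclotomic: "0 < d \<Longrightarrow> integral_poly (cyclotomic d)"
proof (induction d rule: less_induct)
  case (less d)
  define G where "G = (\<Prod>e\<in>{e. e dvd d} - {d}. cyclotomic e)"
  have "cyclotomic d * G = monom 1 d - 1"
    unfolding prod_cyclotomic[OF less.prems, symmetric] G_def using less.prems
    by (subst prod.remove[of _ d]) auto
  moreover have "integral_poly (monom 1 d - 1)"
    by (intro integral_poly_diff integral_poly_monom) (simp_all add: integral_poly_def)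
  moreover have "integral_poly G" unfolding G_def
  proof (rule integral_poly_prod)
    fix e assume e: "e \<in> {e. e dvd d} - {d}"
    then have "0 < e" "e < d" using less.prems by (auto intro: Nat.gr0I dest: dvd_imp_le)
    then show "integral_poly (cyclotomic e)" using less.IH by blast
  qed
  moreover have "lead_coeff G = 1" unfolding G_def lead_coeff_prod by (simp add: lead_coeff_cyclotomic)
  ultimately show ?case using integral_poly_cancel_monic[of G "cyclotomic d"] by (simp add: mult.commute)
qed

lemma cyclotomic_value_Ints: "0 < d \<Longrightarrow> poly (cyclotomic d) (of_nat q) \<in> \<int>"
  by (intro poly_integral_poly_Ints integral_poly_cyclotomic) auto

lemma prod_cyclotomic_value:
  "0 < m \<Longrightarrow> (\<Prod>e\<in>{e. e dvd m}. poly (cyclotomic e) x) = x ^ m - 1"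
  using arg_cong[OF prod_cyclotomic, of m "\<lambda>p. poly p x"] by (simp add: poly_monom poly_prod)

lemma power_minus_1_eq_cyclotomic_value_mult:
  assumes d: "0 < d" "d dvd m" "d < m"
  shows "\<exists>R\<in>\<int>. (of_nat q :: complex) ^ m - 1 = (of_nat q ^ d - 1) * poly (cyclotomic m) (of_nat q) * R"
proof -
  define V where "V e = poly (cyclotomic e) (of_nat q :: complex)" for e
  define A where "A = {e. e dvd d}"
  define B where "B = {e. e dvd m}"
  have m: "0 < m" using d by simp
  have AB: "A \<subseteq> B" using d by (auto simp: A_def B_def intro: dvd_trans)
  have fB: "finite B" using m by (simp add: B_def)
  have mB: "m \<in> B - A" using d by (auto simp: A_def B_def dest: dvd_imp_le)
  have "(of_nat q :: complex) ^ m - 1 = (\<Prod>e\<in>B. V e)"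
    using prod_cyclotomic_value[OF m] by (simp add: B_def V_def)
  also have "\<dots> = (\<Prod>e\<in>A. V e) * V m * (\<Prod>e\<in>B - A - {m}. V e)"
    using prod.subset_diff[OF AB fB, of V] fB mB by (simp add: prod.remove[of "B - A" m] mult_ac)
  also have "(\<Prod>e\<in>A. V e) = (of_nat q) ^ d - 1"
    using prod_cyclotomic_value[OF d(1)] by (simp add: A_def V_def)
  finally have "(of_nat q :: complex) ^ m - 1 = ((of_nat q) ^ d - 1) * V m * (\<Prod>e\<in>B - A - {m}. V e)" .
  moreover have "(\<Prod>e\<in>B - A - {m}. V e) \<in> \<int>"
    using m by (intro Ints_prod) (auto simp: B_def V_def intro!: cyclotomic_value_Ints intro: Nat.gr0I)
  ultimately show ?thesis by (auto simp: V_def)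
qed

lemma cis_in_prim_roots_unity:
  assumes m: "0 < m"
  shows "cis (2 * pi / real m) \<in> prim_roots_unity m"
proof -
  define w where "w = cis (2 * pi / real m)"
  have bij: "bij_betw (\<lambda>k. cis (2 * pi * real k / real m)) {..<m} {z. z ^ m = 1}"
    using m by (rule bij_betw_roots_unity)
  have pow: "w ^ k = cis (2 * pi * real k / real m)" for k by (simp add: w_def DeMoivre mult_ac)
  have "w ^ k \<noteq> 1" if k: "0 < k" "k < m" for k
  proof
    assume "w ^ k = 1"
    then have "cis (2 * pi * real k / real m) = cis (2 * pi * real 0 / real m)" using pow[of k] by simp
    then have "k = 0" by (rule inj_onD[OF bij_betw_imp_inj_on[OF bij]]) (use k in auto)
    then show False using k by simp
  qed
  moreover have "w ^ m = 1" using pow[of m] m by simp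
  ultimately show ?thesis by (simp add: prim_roots_unity_def w_def)
qed

lemma norm_diff_prim_root_unity_gt:
  assumes z: "z \<in> prim_roots_unity m" and m: "2 \<le> m"
  shows "norm (of_real x - z) > x - 1"
proof -
  have "z \<noteq> 1" using z m by (auto simp: prim_roots_unity_def)
  have "norm z ^ m = 1" using z by (metis (mono_tags) mem_Collect_eq norm_one norm_power prim_roots_unity_def)
  then have nz: "norm z = 1" using power_eq_imp_eq_base[of "norm z" m 1] m by simp
  have "Re z < 1"
  proof (rule ccontr)
    assume "\<not> Re z < 1"
    then have "Re z = 1" using nz complex_Re_le_cmod[of z] by simp
    moreover have "(Re z)\<^sup>2 + (Im z)\<^sup>2 = 1" using nz by (metis cmod_power2 power_one)
    ultimately show False using \<open>z \<noteq> 1\<close> by (simp add: complex_eq_iff)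
  qed
  then show ?thesis using complex_Re_le_cmod[of "of_real x - z"] by simp
qed

lemma norm_cyclotomic_value_gt:
  assumes m: "2 \<le> m" and q: "2 \<le> q"
  shows "norm (poly (cyclotomic m) (of_nat q :: complex)) > real q - 1"
proof -
  define f where "f z = norm (of_real (real q) - z)" for z :: complex
  define w where "w = cis (2 * pi / real m)"
  have w: "w \<in> prim_roots_unity m" using m cis_in_prim_roots_unity[of m] by (simp add: w_def)
  have f_gt: "f z > real q - 1" if "z \<in> prim_roots_unity m" for z
    unfolding f_def using that m by (rule norm_diff_prim_root_unity_gt)
  have "norm (poly (cyclotomic m) (of_nat q :: complex)) = (\<Prod>z\<in>prim_roots_unity m. f z)"
    unfolding cyclotomic_def poly_prod by (simp add: prod_norm f_def)
  also have "\<dots> = f w * (\<Prod>z\<in>prim_roots_unity m - {w}. f z)"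
    using finite_prim_roots_unity[of m] m w by (simp add: prod.remove)
  also have "\<dots> \<ge> f w * 1"
  proof (intro mult_left_mono prod_ge_1)
    fix z assume "z \<in> prim_roots_unity m - {w}"
    then show "1 \<le> f z" using f_gt[of z] q by simp
  qed (simp add: f_def)
  finally show ?thesis using f_gt[OF w] by simp
qed

text \<open>The value \<open>\<Phi>\<^sub>m(q)\<close> is the integer that makes the class equation of Wedderburn's theorem
  impossible.\<close>

lemma cyclotomic_value_divisor:
  fixes q m :: nat
  assumes m: "2 \<le> m" and q: "2 \<le> q"
  obtains N :: int where "\<bar>N\<bar> > int q - 1"
    and "\<And>d. d dvd m \<Longrightarrow> d < m \<Longrightarrow> N * (int q ^ d - 1) dvd int q ^ m - 1"
proof -
  define V where "V = poly (cyclotomic m) (of_nat q :: complex)"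
  obtain N where N: "V = of_int N"
    using cyclotomic_value_Ints[of m q] m by (auto simp: V_def elim: Ints_cases)
  have "real_of_int \<bar>N\<bar> > real q - 1"
    using norm_cyclotomic_value_gt[OF m q] N by (simp add: V_def)
  then have "\<bar>N\<bar> > int q - 1" by linarith
  moreover have "N * (int q ^ d - 1) dvd int q ^ m - 1" if d: "d dvd m" "d < m" for d
  proof -
    have "0 < d" using d m by (auto intro: Nat.gr0I)
    then obtain R where "R \<in> \<int>" and R: "(of_nat q :: complex) ^ m - 1 = (of_nat q ^ d - 1) * V * R"
      using power_minus_1_eq_cyclotomic_value_mult[of d m q] d by (auto simp: V_def)
    then obtain r where r: "R = of_int r" by (auto elim: Ints_cases)
    have "(of_int (int q ^ m - 1) :: complex) = of_int ((int q ^ d - 1) * N * r)"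
      using R by (simp add: N r)
    then have "int q ^ m - 1 = N * (int q ^ d - 1) * r" by (simp only: of_int_eq_iff mult_ac)
    then show ?thesis by simp
  qed
  ultimately show ?thesis using that by blast
qed

section \<open>Wedderburn's little theorem\<close>

lemma division_subring_UNIV: "division_subring (UNIV :: 'a::division_ring set)"
  by unfold_locales simp_all

lemma division_subring_Int:
  assumes "division_subring A" "division_subring B"
  shows "division_subring (A \<inter> B)"
proof -
  interpret A: division_subring A by fact
  interpret B: division_subring B by fact
  show ?thesis
    by unfold_locales
      (auto intro: A.add_closed B.add_closed A.mult_closed B.mult_closed
        A.uminus_closed B.uminus_closed A.inverse_closed B.inverse_closed)
qed

lemma division_subring_INT:
  assumes "\<And>y. y \<in> Y \<Longrightarrow> division_subring (A y)"
  shows "division_subring (\<Inter>y\<in>Y. A y)"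
  using assms
  by unfold_locales
    (auto intro: division_subring.zero_closed division_subring.one_closed
      division_subring.add_closed division_subring.mult_closed
      division_subring.uminus_closed division_subring.inverse_closed)

lemma division_subring_commutant: "division_subring {y. x * y = y * x}"
proof unfold_locales
  fix y z assume "y \<in> {y. x * y = y * x}" "z \<in> {y. x * y = y * x}"
  then have y: "x * y = y * x" and z: "x * z = z * x" by simp_all
  then show "y + z \<in> {y. x * y = y * x}" by (simp add: distrib_left distrib_right)
  have "x * (y * z) = y * (x * z)" by (simp only: mult.assoc[symmetric] y)
  also have "\<dots> = (y * z) * x" by (simp only: z mult.assoc)
  finally show "y * z \<in> {y. x * y = y * x}" by simp
next
  fix y assume "y \<in> {y. x * y = y * x}"
  then have y: "y * x = x * y" by simp
  then show "- y \<in> {y. x * y = y * x}" by simp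
  from mult_commute_imp_mult_inverse_commute[OF y]
  show "inverse y \<in> {y. x * y = y * x}" by simp
qed simp_all

definition centralizer :: "'a::division_ring set \<Rightarrow> 'a \<Rightarrow> 'a set" where
  "centralizer S x = {y \<in> S. x * y = y * x}"

definition center :: "'a::division_ring set \<Rightarrow> 'a set" where
  "center S = {z \<in> S. \<forall>y\<in>S. y * z = z * y}"

lemma center_UNIV_iff: "z \<in> center UNIV \<longleftrightarrow> (\<forall>y. z * y = y * z)"
  by (auto simp: center_def)

lemma center_UNIV_power: "c \<in> center UNIV \<Longrightarrow> c ^ k \<in> center UNIV"
  by (simp add: center_UNIV_iff power_commuting_commutes)

lemma of_nat_in_center_UNIV: "of_nat k \<in> center UNIV"
  by (simp add: center_UNIV_iff mult_of_nat_commute)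

definition conjugacy_class :: "'a::division_ring set \<Rightarrow> 'a \<Rightarrow> 'a set" where
  "conjugacy_class S x = (\<lambda>g. g * x * inverse g) ` (S - {0})"

context division_subring
begin

lemma division_subring_centralizer: "division_subring (centralizer S x)"
proof -
  have "centralizer S x = S \<inter> {y. x * y = y * x}" by (auto simp: centralizer_def)
  then show ?thesis
    by (simp add: division_subring_Int division_subring_axioms division_subring_commutant)
qed

lemma division_subring_center: "division_subring (center S)"
proof -
  have "center S = S \<inter> (\<Inter>y\<in>S. {z. y * z = z * y})" by (auto simp: center_def)
  then show ?thesis
    by (simp add: division_subring_Int division_subring_INT division_subring_axioms division_subring_commutant)
qed

lemma self_in_conjugacy_class: "x \<in> conjugacy_class S x"
  unfolding conjugacy_class_def by (rule image_eqI[of _ _ 1]) simp_all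

lemma conjugacy_class_eq:
  assumes "w \<in> conjugacy_class S x"
  shows "conjugacy_class S w = conjugacy_class S x"
proof -
  obtain h where h: "h \<in> S" "h \<noteq> 0" "w = h * x * inverse h"
    using assms unfolding conjugacy_class_def by auto
  have "conjugacy_class S w \<subseteq> conjugacy_class S x"
  proof
    fix y assume "y \<in> conjugacy_class S w"
    then obtain g where g: "g \<in> S" "g \<noteq> 0" "y = g * w * inverse g" unfolding conjugacy_class_def by auto
    then have "y = (g * h) * x * inverse (g * h)"
      using h by (simp add: nonzero_inverse_mult_distrib mult.assoc)
    moreover have "g * h \<in> S - {0}" using g h mult_closed by simp
    ultimately show "y \<in> conjugacy_class S x" unfolding conjugacy_class_def by blast
  qed
  moreover have "conjugacy_class S x \<subseteq> conjugacy_class S w"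
  proof
    fix y assume "y \<in> conjugacy_class S x"
    then obtain g where g: "g \<in> S" "g \<noteq> 0" "y = g * x * inverse g" unfolding conjugacy_class_def by auto
    then have "y = (g * inverse h) * w * inverse (g * inverse h)"
      using h by (simp add: nonzero_inverse_mult_distrib mult.assoc)
    moreover have "g * inverse h \<in> S - {0}" using g h mult_closed inverse_closed by simp
    ultimately show "y \<in> conjugacy_class S w" unfolding conjugacy_class_def by blast
  qed
  ultimately show ?thesis by blast
qed

lemma conjugacy_class_subset_noncentral:
  assumes "x \<in> S - center S"
  shows "conjugacy_class S x \<subseteq> S - center S"
proof
  fix w assume "w \<in> conjugacy_class S x"
  then obtain g where g: "g \<in> S" "g \<noteq> 0" "w = g * x * inverse g" unfolding conjugacy_class_def by auto
  then have "w \<in> S" using assms mult_closed inverse_closed by simp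
  moreover have "w \<notin> center S"
  proof
    assume "w \<in> center S"
    then have "g * w = w * g" using g by (simp add: center_def)
    then have "x = w" using g by (simp add: mult.assoc)
    then show False using assms \<open>w \<in> center S\<close> by simp
  qed
  ultimately show "w \<in> S - center S" by simp
qed

lemma conjugators_eq:
  assumes h: "h \<in> S" "h \<noteq> 0"
  shows "{g \<in> S - {0}. g * x * inverse g = h * x * inverse h} = (\<lambda>c. h * c) ` (centralizer S x - {0})"
proof (intro equalityI subsetI)
  fix g assume "g \<in> {g \<in> S - {0}. g * x * inverse g = h * x * inverse h}"
  then have g: "g \<in> S" "g \<noteq> 0" "g * x * inverse g = h * x * inverse h" by auto
  define c where "c = inverse h * g"
  have "inverse h * (g * x * inverse g) * g = inverse h * (h * x * inverse h) * g" using g by simp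
  then have "x * c = c * x" using g h by (simp add: c_def mult.assoc)
  moreover have "c \<in> S" "c \<noteq> 0" using g h mult_closed inverse_closed by (auto simp: c_def)
  moreover have "g = h * c" using h by (simp add: c_def mult.assoc[symmetric])
  ultimately show "g \<in> (\<lambda>c. h * c) ` (centralizer S x - {0})" unfolding centralizer_def by auto
next
  fix g assume "g \<in> (\<lambda>c. h * c) ` (centralizer S x - {0})"
  then obtain c where c: "c \<in> S" "c \<noteq> 0" "x * c = c * x" "g = h * c"
    unfolding centralizer_def by auto
  then have "g * x * inverse g = h * (c * x * inverse c) * inverse h"
    using h by (simp add: nonzero_inverse_mult_distrib mult.assoc)
  also have "c * x * inverse c = x * c * inverse c" using c(3) by simp
  also have "\<dots> = x" using c(2) by (simp add: mult.assoc)
  finally show "g \<in> {g \<in> S - {0}. g * x * inverse g = h * x * inverse h}"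
    using c h mult_closed by auto
qed

text \<open>Orbit--stabiliser: each fibre of \<open>g \<mapsto> g x g\<^sup>-\<^sup>1\<close> is a coset of the units of the
  centraliser of \<open>x\<close>.\<close>

lemma card_conjugacy_class_mult:
  assumes fin: "finite S" and x: "x \<in> S"
  shows "card (conjugacy_class S x) * (card (centralizer S x) - 1) = card S - 1"
proof -
  define F where "F w = {g \<in> S - {0}. g * x * inverse g = w}" for w
  have fibre: "card (F w) = card (centralizer S x - {0})" if w: "w \<in> conjugacy_class S x" for w
  proof -
    obtain h where h: "h \<in> S" "h \<noteq> 0" "w = h * x * inverse h"
      using w unfolding conjugacy_class_def by auto
    have "inj_on (\<lambda>c. h * c) (centralizer S x - {0})" using h by (auto intro: inj_onI)
    then show ?thesis using conjugators_eq[OF h(1,2)] by (simp add: F_def h(3) card_image)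
  qed
  have "S - {0} = (\<Union>w\<in>conjugacy_class S x. F w)"
    unfolding conjugacy_class_def F_def by auto
  then have "card (S - {0}) = card (\<Union>w\<in>conjugacy_class S x. F w)" by simp
  also have "\<dots> = (\<Sum>w\<in>conjugacy_class S x. card (F w))"
  proof (rule card_UN_disjoint)
    show "finite (conjugacy_class S x)" using fin by (simp add: conjugacy_class_def)
    show "\<forall>w\<in>conjugacy_class S x. finite (F w)" using fin by (simp add: F_def)
    show "\<forall>w\<in>conjugacy_class S x. \<forall>w'\<in>conjugacy_class S x. w \<noteq> w' \<longrightarrow> F w \<inter> F w' = {}"
      by (auto simp: F_def)
  qed
  also have "\<dots> = card (conjugacy_class S x) * card (centralizer S x - {0})" using fibre by simp
  also have "card (centralizer S x - {0}) = card (centralizer S x) - 1"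
    using fin by (intro card_Diff_singleton) (auto simp: centralizer_def)
  finally show ?thesis using fin by (simp add: card_Diff_singleton)
qed

lemma class_equation:
  assumes fin: "finite S"
  shows "card S - card (center S) = (\<Sum>C\<in>conjugacy_class S ` (S - center S). card C)"
proof -
  have "center S \<subseteq> S" by (auto simp: center_def)
  then have "card S - card (center S) = card (S - center S)"
    using fin by (simp add: card_Diff_subset finite_subset)
  also have "S - center S = \<Union>(conjugacy_class S ` (S - center S))"
  proof
    show "S - center S \<subseteq> \<Union>(conjugacy_class S ` (S - center S))"
      using self_in_conjugacy_class by blast
    show "\<Union>(conjugacy_class S ` (S - center S)) \<subseteq> S - center S"
      using conjugacy_class_subset_noncentral by blast
  qed
  also have "card \<dots> = (\<Sum>C\<in>conjugacy_class S ` (S - center S). card C)"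
  proof (rule card_Union_disjoint)
    show "pairwise disjnt (conjugacy_class S ` (S - center S))"
    proof (rule pairwiseI)
      fix A B assume "A \<in> conjugacy_class S ` (S - center S)" "B \<in> conjugacy_class S ` (S - center S)" "A \<noteq> B"
      then obtain x y where AB: "A = conjugacy_class S x" "B = conjugacy_class S y" by auto
      show "disjnt A B"
      proof (rule ccontr)
        assume "\<not> disjnt A B"
        then obtain w where "w \<in> A" "w \<in> B" by (auto simp: disjnt_def)
        then have "A = B" using AB conjugacy_class_eq[of w x] conjugacy_class_eq[of w y] by simp
        with \<open>A \<noteq> B\<close> show False by simp
      qed
    qed
    show "finite C" if "C \<in> conjugacy_class S ` (S - center S)" for C
      using that fin by (auto simp: conjugacy_class_def)
  qed
  finally show ?thesis .
qed

lemma card_intermediate_division_subring: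
  assumes fin: "finite S" and Z: "division_subring Z" "Z \<subseteq> C"
    and C: "division_subring C" "C \<subseteq> S" and m: "card S = card Z ^ m"
  obtains d k where "card C = card Z ^ d" "m = d * k"
proof -
  have finC: "finite C" and finZ: "finite Z" using fin Z(2) C(2) by (auto intro: finite_subset)
  obtain d where d: "card C = card Z ^ d"
    using card_left_module_eq_power[OF Z(1) finZ _ finC] division_subring.left_module_superring[OF Z(1) C(1) Z(2)]
    by blast
  obtain k where k: "card S = card C ^ k"
    using card_left_module_eq_power[OF C(1) finC _ fin]
      division_subring.left_module_superring[OF C(1) division_subring_axioms C(2)]
    by blast
  have "card Z ^ m = card Z ^ (d * k)" using m d k by (simp add: power_mult)
  then have "m = d * k" using division_subring.card_ge_2[OF Z(1) finZ] by (simp add: power_inject_exp)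
  with d show ?thesis by (rule that)
qed

lemma card_noncentral_conjugacy_class:
  assumes fin: "finite S" and m: "card S = card (center S) ^ m"
    and w: "w \<in> S" "w \<notin> center S"
  obtains d where "d dvd m" "0 < d" "d < m"
    and "int (card (conjugacy_class S w)) * (int (card (center S)) ^ d - 1) = int (card (center S)) ^ m - 1"
proof -
  let ?Z = "center S" and ?C = "centralizer S w"
  have Z: "division_subring ?Z" "?Z \<subseteq> S" using division_subring_center by (auto simp: center_def)
  have q2: "2 \<le> card ?Z" using division_subring.card_ge_2[OF Z(1)] fin Z(2) finite_subset by blast
  have "?Z \<subseteq> ?C" using w(1) by (auto simp: center_def centralizer_def)
  moreover have "?C \<subseteq> S" by (auto simp: centralizer_def)
  ultimately obtain d k where d: "card ?C = card ?Z ^ d" and mdk: "m = d * k"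
    using card_intermediate_division_subring[OF fin Z(1) _ division_subring_centralizer _ m] by blast
  have "m \<noteq> 0" using m card_ge_2[OF fin] by (cases m) auto
  have "d \<noteq> m"
  proof
    assume "d = m"
    then have "?C = S" using d m fin \<open>?C \<subseteq> S\<close> by (metis card_subset_eq)
    then have "w * y = y * w" if "y \<in> S" for y using that by (auto simp: centralizer_def)
    then have "w \<in> ?Z" using w(1) by (simp add: center_def)
    with w(2) show False by simp
  qed
  then have "d dvd m" "0 < d" "d < m"
    using mdk \<open>m \<noteq> 0\<close> by (auto simp: nat_0_less_mult_iff dest: nat_mult_eq_cancel1[of d k 1])
  moreover have "card (conjugacy_class S w) * (card ?Z ^ d - 1) = card ?Z ^ m - 1"
    using card_conjugacy_class_mult[OF fin w(1)] d m by simp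
  moreover have "1 \<le> card ?Z ^ d" "1 \<le> card ?Z ^ m" using q2 by simp_all
  ultimately show ?thesis using that by (metis of_nat_1 of_nat_diff of_nat_mult of_nat_power)
qed

theorem wedderburn:
  assumes fin: "finite S" and xy: "x \<in> S" "y \<in> S"
  shows "x * y = y * x"
proof (rule ccontr)
  assume nc: "x * y \<noteq> y * x"
  define Z where "Z = center S"
  define q where "q = card Z"
  have Z: "division_subring Z" "Z \<subseteq> S" using division_subring_center by (auto simp: Z_def center_def)
  have finZ: "finite Z" using fin Z(2) by (rule finite_subset[rotated])
  have q2: "2 \<le> q" unfolding q_def by (rule division_subring.card_ge_2[OF Z(1) finZ])
  obtain m where m: "card S = q ^ m"
    using card_left_module_eq_power[OF Z(1) finZ _ fin]
      division_subring.left_module_superring[OF Z(1) division_subring_axioms Z(2)]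
    unfolding q_def by blast
  have "x \<notin> Z"
  proof
    assume "x \<in> Z"
    then have "y * x = x * y" using xy(2) by (simp add: Z_def center_def)
    with nc show False by simp
  qed
  then have "q ^ 1 < q ^ m" using xy Z(2) fin m unfolding q_def by (metis psubsetI psubset_card_mono power_one_right)
  then have m2: "2 \<le> m" using q2 power_less_imp_less_exp[of q 1 m] by simp
  obtain N where N: "\<bar>N\<bar> > int q - 1"
    and N_dvd: "\<And>d. d dvd m \<Longrightarrow> d < m \<Longrightarrow> N * (int q ^ d - 1) dvd int q ^ m - 1"
    using cyclotomic_value_divisor[OF m2 q2] by blast
  have class_dvd: "N dvd int (card C)" if C_class: "C \<in> conjugacy_class S ` (S - Z)" for C
  proof -
    obtain w where w: "w \<in> S" "w \<notin> Z" and C: "C = conjugacy_class S w" using C_class by blast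
    obtain d where "d dvd m" "0 < d" "d < m" and eq: "int (card C) * (int q ^ d - 1) = int q ^ m - 1"
      using card_noncentral_conjugacy_class[OF fin m[unfolded q_def Z_def] w[unfolded Z_def]]
      unfolding C q_def Z_def by blast
    moreover have "1 < int q ^ d" using q2 \<open>0 < d\<close> by (simp add: one_less_power)
    ultimately show ?thesis using N_dvd[of d] by (simp flip: eq)
  qed
  have "q \<le> q ^ m" using q2 m2 by (simp add: self_le_power)
  then have "int q ^ m - int q = int (card S - card Z)"
    using m by (simp add: q_def of_nat_diff)
  also have "\<dots> = (\<Sum>C\<in>conjugacy_class S ` (S - Z). int (card C))"
    using class_equation[OF fin] by (simp add: Z_def)
  finally have "N dvd int q ^ m - int q"
    using dvd_sum[of _ N, OF class_dvd] by simp
  moreover have "N dvd int q ^ m - 1"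
    using N_dvd[of 1] m2 by (auto intro: dvd_mult_left)
  ultimately have "N dvd (int q ^ m - 1) - (int q ^ m - int q)" by (rule dvd_diff[rotated])
  then have "\<bar>N\<bar> \<le> int q - 1" using dvd_imp_le_int[of "int q - 1" N] q2 by simp
  with N show False by simp
qed

end

section \<open>Binomial expansions for commuting elements and the Frobenius map\<close>

lemma sum_choose_Suc:
  fixes F :: "nat \<Rightarrow> 'a::ring_1"
  shows "(\<Sum>k\<le>Suc n. of_nat (Suc n choose k) * F k)
    = (\<Sum>k\<le>n. of_nat (n choose k) * F k) + (\<Sum>k\<le>n. of_nat (n choose k) * F (Suc k))"
proof -
  have "(\<Sum>k\<le>n. of_nat (n choose k) * F k) = (\<Sum>k\<le>Suc n. of_nat (n choose k) * F k)"
    by (simp add: binomial_eq_0)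
  also have "\<dots> = F 0 + (\<Sum>k\<le>n. of_nat (n choose Suc k) * F (Suc k))"
    by (subst sum.atMost_Suc_shift) simp
  finally show ?thesis
    by (subst sum.atMost_Suc_shift) (simp add: sum.distrib distrib_right)
qed

text \<open>\<open>lr_mult a b\<close> is the sum of the commuting operators of left multiplication by \<open>a\<close> and
  right multiplication by \<open>b\<close>, so its powers expand binomially even in a noncommutative ring.\<close>

definition lr_mult :: "'a::ring_1 \<Rightarrow> 'a \<Rightarrow> 'a \<Rightarrow> 'a" where
  "lr_mult a b y = a * y + y * b"

lemma lr_mult_funpow:
  fixes a b y :: "'a::ring_1"
  shows "(lr_mult a b ^^ j) y = (\<Sum>k\<le>j. of_nat (j choose k) * (a ^ (j - k) * y * b ^ k))"
proof (induction j)
  case (Suc n)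
  define F where "F k = a ^ (Suc n - k) * y * b ^ k" for k
  have left: "a * (of_nat (n choose k) * (a ^ (n - k) * y * b ^ k)) = of_nat (n choose k) * F k"
    if "k \<le> n" for k
  proof -
    have "a * (of_nat (n choose k) * (a ^ (n - k) * y * b ^ k))
        = (a * of_nat (n choose k)) * (a ^ (n - k) * y * b ^ k)"
      by (simp only: mult.assoc)
    also have "a * of_nat (n choose k) = of_nat (n choose k) * a" by (simp only: mult_of_nat_commute)
    finally show ?thesis using that by (simp add: F_def Suc_diff_le mult.assoc)
  qed
  have right: "of_nat (n choose k) * (a ^ (n - k) * y * b ^ k) * b = of_nat (n choose k) * F (Suc k)" for k
    by (simp add: F_def mult.assoc power_commutes)
  have "(lr_mult a b ^^ Suc n) y
      = a * (\<Sum>k\<le>n. of_nat (n choose k) * (a ^ (n - k) * y * b ^ k))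
        + (\<Sum>k\<le>n. of_nat (n choose k) * (a ^ (n - k) * y * b ^ k)) * b"
    by (simp only: funpow.simps comp_apply Suc.IH lr_mult_def)
  also have "\<dots> = (\<Sum>k\<le>n. a * (of_nat (n choose k) * (a ^ (n - k) * y * b ^ k)))
        + (\<Sum>k\<le>n. of_nat (n choose k) * (a ^ (n - k) * y * b ^ k) * b)"
    by (simp only: sum_distrib_left sum_distrib_right)
  also have "\<dots> = (\<Sum>k\<le>n. of_nat (n choose k) * F k) + (\<Sum>k\<le>n. of_nat (n choose k) * F (Suc k))"
    by (intro arg_cong2[where f = "(+)"] sum.cong refl) (simp_all add: left right)
  also have "\<dots> = (\<Sum>k\<le>Suc n. of_nat (Suc n choose k) * F k)"
    by (rule sum_choose_Suc[symmetric])
  finally show ?case by (simp add: F_def)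
qed simp

lemma lr_mult_funpow_one:
  fixes a b :: "'a::ring_1"
  assumes ab: "a * b = b * a"
  shows "(lr_mult a b ^^ j) 1 = (a + b) ^ j"
proof (induction j)
  case (Suc n)
  have "b * (a + b) ^ n = (a + b) ^ n * b"
    by (rule power_commuting_commutes[symmetric]) (simp add: distrib_left distrib_right ab)
  then show ?case using Suc by (simp add: lr_mult_def distrib_right)
qed simp

lemma commuting_binomial:
  fixes a b :: "'a::ring_1"
  assumes "a * b = b * a"
  shows "(a + b) ^ j = (\<Sum>k\<le>j. of_nat (j choose k) * (a ^ (j - k) * b ^ k))"
  using lr_mult_funpow[where a=a and b=b and j=j and y=1] lr_mult_funpow_one[OF assms, of j] by simp

lemma lr_mult_funpow_CHAR:
  fixes a b y :: "'a::ring_1"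
  assumes p: "prime CHAR('a)"
  shows "(lr_mult a b ^^ CHAR('a)) y = a ^ CHAR('a) * y + y * b ^ CHAR('a)"
proof -
  let ?p = "CHAR('a)"
  have "0 < ?p" using p by (simp add: prime_gt_0_nat)
  have "(of_nat (?p choose k) :: 'a) = 0" if "0 < k" "k < ?p" for k
    using dvd_choose_prime[of k ?p] p that by (simp add: of_nat_eq_0_iff_char_dvd)
  then have "(\<Sum>k\<le>?p. of_nat (?p choose k) * (a ^ (?p - k) * y * b ^ k))
      = (\<Sum>k\<in>{0, ?p}. of_nat (?p choose k) * (a ^ (?p - k) * y * b ^ k))"
    by (intro sum.mono_neutral_right) auto
  then show ?thesis using \<open>0 < ?p\<close> by (simp add: lr_mult_funpow)
qed

lemma commuting_add_power_CHAR:
  fixes a b :: "'a::ring_1"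
  assumes "prime CHAR('a)" and "a * b = b * a"
  shows "(a + b) ^ CHAR('a) = a ^ CHAR('a) + b ^ CHAR('a)"
  using lr_mult_funpow_CHAR[OF assms(1), of a b 1] lr_mult_funpow_one[OF assms(2)] by simp

lemma commuting_add_power_CHAR_power:
  fixes a b :: "'a::ring_1"
  assumes p: "prime CHAR('a)" and ab: "a * b = b * a"
  shows "(a + b) ^ (CHAR('a) ^ e) = a ^ (CHAR('a) ^ e) + b ^ (CHAR('a) ^ e)"
proof (induction e)
  case (Suc e)
  have "a ^ (CHAR('a) ^ e) * b ^ (CHAR('a) ^ e) = b ^ (CHAR('a) ^ e) * a ^ (CHAR('a) ^ e)"
    by (intro power_commuting_commutes ab[symmetric] power_commuting_commutes[symmetric])
  then have "((a + b) ^ (CHAR('a) ^ e)) ^ CHAR('a) = (a ^ (CHAR('a) ^ e)) ^ CHAR('a) + (b ^ (CHAR('a) ^ e)) ^ CHAR('a)"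
    unfolding Suc by (rule commuting_add_power_CHAR[OF p])
  then show ?case by (simp add: power_mult[symmetric] mult.commute)
qed simp

definition ad :: "'a::ring_1 \<Rightarrow> 'a \<Rightarrow> 'a" where
  "ad x y = x * y - y * x"

lemma ad_eq_lr_mult: "ad x = lr_mult x (- x)"
  by (simp add: ad_def lr_mult_def fun_eq_iff)

lemma ad_funpow_CHAR:
  fixes x :: "'a::ring_1"
  assumes p: "prime CHAR('a)"
  shows "ad x ^^ CHAR('a) = ad (x ^ CHAR('a))"
proof
  fix y
  have "(- x) ^ CHAR('a) = - (x ^ CHAR('a))" by (rule minus_power_prime_CHAR[OF refl p])
  then show "(ad x ^^ CHAR('a)) y = ad (x ^ CHAR('a)) y"
    unfolding ad_eq_lr_mult lr_mult_funpow_CHAR[OF p] by (simp add: lr_mult_def)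
qed

lemma ad_funpow_CHAR_power:
  fixes x :: "'a::ring_1"
  assumes p: "prime CHAR('a)"
  shows "ad x ^^ (CHAR('a) ^ e) = ad (x ^ (CHAR('a) ^ e))"
proof (induction e)
  case (Suc e)
  have "ad x ^^ (CHAR('a) ^ Suc e) = (ad x ^^ (CHAR('a) ^ e)) ^^ CHAR('a)"
    by (simp add: funpow_mult mult.commute)
  also have "\<dots> = ad ((x ^ (CHAR('a) ^ e)) ^ CHAR('a))" unfolding Suc by (rule ad_funpow_CHAR[OF p])
  finally show ?case by (simp add: power_mult[symmetric] mult.commute)
qed simp

lemma ad_eq_0_iff: "ad x y = 0 \<longleftrightarrow> x * y = y * x"
  by (simp add: ad_def)

lemma ad_sum_left: "ad (\<Sum>i\<in>A. f i) y = (\<Sum>i\<in>A. ad (f i) y)"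
  unfolding ad_def by (simp add: sum_distrib_left sum_distrib_right sum_subtractf)

lemma ad_sum_right: "ad x (\<Sum>i\<in>A. f i) = (\<Sum>i\<in>A. ad x (f i))"
  unfolding ad_def by (simp add: sum_distrib_left sum_distrib_right sum_subtractf)

lemma ad_central_mult_left: "c \<in> center UNIV \<Longrightarrow> ad (c * u) y = c * ad u y"
  unfolding ad_def center_UNIV_iff by (simp add: right_diff_distrib mult.assoc)

section \<open>Vandermonde's argument over commuting nodes\<close>

lemma commuting_power_diff_factor:
  fixes t s :: "'a::ring_1"
  assumes ts: "t * s = s * t"
  shows "(t - s) * (\<Sum>a<k. t ^ a * s ^ (k - Suc a)) = t ^ k - s ^ k"
proof (induction k)
  case (Suc k)
  define G where "G = (\<Sum>a<k. t ^ a * s ^ (k - Suc a))"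
  have st: "s * t ^ a = t ^ a * s" for a by (rule power_commuting_commutes[OF ts, symmetric])
  have "(\<Sum>a<k. t ^ a * s ^ (k - a)) = s * G"
    unfolding G_def sum_distrib_left
  proof (intro sum.cong refl)
    fix a assume "a \<in> {..<k}"
    then have "k - a = Suc (k - Suc a)" by auto
    then show "t ^ a * s ^ (k - a) = s * (t ^ a * s ^ (k - Suc a))"
      by (simp add: mult.assoc[symmetric] st)
  qed
  then have "(\<Sum>a<Suc k. t ^ a * s ^ (Suc k - Suc a)) = s * G + t ^ k" by simp
  moreover have "(t - s) * s = s * (t - s)" using ts by (simp add: algebra_simps)
  then have "(t - s) * (s * G + t ^ k) = s * ((t - s) * G) + (t - s) * t ^ k"
    by (simp add: distrib_left mult.assoc[symmetric])
  moreover have "(t - s) * G = t ^ k - s ^ k" using Suc by (simp add: G_def)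
  moreover have "s * (t ^ k - s ^ k) + (t - s) * t ^ k = t ^ Suc k - s ^ Suc k"
    by (simp add: algebra_simps st power_commutes)
  ultimately show ?case by simp
qed simp

text \<open>The quotient of \<open>\<Sum>\<^sub>i\<^sub><\<^sub>k t\<^sup>i c\<^sub>i\<close> by \<open>t - t\<^sub>0\<close>, computed by Horner's scheme from the top.\<close>

definition synthetic_quotient :: "'a::ring_1 \<Rightarrow> (nat \<Rightarrow> 'a) \<Rightarrow> nat \<Rightarrow> nat \<Rightarrow> 'a" where
  "synthetic_quotient t0 c k a = (\<Sum>j\<in>{Suc a..<k}. t0 ^ (j - Suc a) * c j)"

lemma synthetic_quotient_top [simp]: "k \<le> Suc a \<Longrightarrow> synthetic_quotient t0 c k a = 0"
  by (simp add: synthetic_quotient_def)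

lemma synthetic_quotient_rec:
  assumes "0 < a" "a < k"
  shows "synthetic_quotient t0 c k (a - 1) = c a + t0 * synthetic_quotient t0 c k a"
proof -
  have "{Suc (a - 1)..<k} = insert a {Suc a..<k}" using assms by auto
  then have "synthetic_quotient t0 c k (a - 1) = c a + (\<Sum>j\<in>{Suc a..<k}. t0 ^ (j - a) * c j)"
    using assms by (simp add: synthetic_quotient_def)
  also have "(\<Sum>j\<in>{Suc a..<k}. t0 ^ (j - a) * c j) = t0 * synthetic_quotient t0 c k a"
    unfolding synthetic_quotient_def sum_distrib_left
  proof (intro sum.cong refl)
    fix j assume "j \<in> {Suc a..<k}"
    then have "j - a = Suc (j - Suc a)" by auto
    then show "t0 ^ (j - a) * c j = t0 * (t0 ^ (j - Suc a) * c j)" by (simp add: mult.assoc)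
  qed
  finally show ?thesis .
qed

lemma poly_diff_eq_mult_synthetic_quotient:
  fixes t t0 :: "'a::ring_1"
  assumes tt: "t * t0 = t0 * t"
  shows "(\<Sum>i<k. t ^ i * c i) - (\<Sum>i<k. t0 ^ i * c i)
    = (t - t0) * (\<Sum>a<k. t ^ a * synthetic_quotient t0 c k a)"
proof (induction k)
  case (Suc k)
  let ?D = "synthetic_quotient t0 c"
  have "?D (Suc k) a = ?D k a + (if a < k then t0 ^ (k - Suc a) * c k else 0)" for a
    unfolding synthetic_quotient_def by (cases "a < k") auto
  then have "(\<Sum>a<Suc k. t ^ a * ?D (Suc k) a)
      = (\<Sum>a<k. t ^ a * ?D k a) + (\<Sum>a<k. t ^ a * t0 ^ (k - 1 - a)) * c k"
    by (simp add: distrib_left sum.distrib sum_distrib_right mult.assoc)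
  then have "(t - t0) * (\<Sum>a<Suc k. t ^ a * ?D (Suc k) a)
      = (t - t0) * (\<Sum>a<k. t ^ a * ?D k a) + ((t - t0) * (\<Sum>a<k. t ^ a * t0 ^ (k - Suc a))) * c k"
    by (simp add: distrib_left mult.assoc)
  also have "(t - t0) * (\<Sum>a<k. t ^ a * t0 ^ (k - Suc a)) = t ^ k - t0 ^ k"
    by (rule commuting_power_diff_factor[OF tt])
  also note Suc.IH[symmetric]
  finally show ?case by (simp add: algebra_simps)
qed simp

lemma commuting_poly_eq_0_imp_coeffs_eq_0:
  fixes c :: "nat \<Rightarrow> 'a::division_ring"
  assumes "finite T" "\<And>s t. s \<in> T \<Longrightarrow> t \<in> T \<Longrightarrow> s * t = t * s" "k \<le> card T"
    "\<And>t. t \<in> T \<Longrightarrow> (\<Sum>i<k. t ^ i * c i) = 0"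
  shows "\<forall>i<k. c i = 0"
  using assms
proof (induction k arbitrary: T c)
  case (Suc k)
  obtain t0 where t0: "t0 \<in> T" using Suc.prems(3) by fastforce
  define D where "D = synthetic_quotient t0 c (Suc k)"
  have "(\<Sum>a<k. t ^ a * D a) = 0" if t: "t \<in> T - {t0}" for t
  proof -
    have "(t - t0) * (\<Sum>a<Suc k. t ^ a * D a)
        = (\<Sum>i<Suc k. t ^ i * c i) - (\<Sum>i<Suc k. t0 ^ i * c i)"
      unfolding D_def by (rule poly_diff_eq_mult_synthetic_quotient[symmetric]) (use Suc.prems(2) t t0 in blast)
    also have "\<dots> = 0" using Suc.prems(4)[of t] Suc.prems(4)[of t0] t t0 by (simp del: sum.lessThan_Suc)
    finally show ?thesis using t by (simp add: D_def)
  qed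
  then have D0: "\<forall>a<k. D a = 0"
    using Suc.prems(1-3) t0 by (intro Suc.IH[where T="T - {t0}"]) auto
  have c_pos: "c a = 0" if "0 < a" "a \<le> k" for a
    using synthetic_quotient_rec[of a "Suc k" t0 c] D0 that by (cases "a < k") (simp_all add: D_def)
  have "(\<Sum>i<Suc k. t0 ^ i * c i) = (\<Sum>i\<in>{0}. t0 ^ i * c i)"
    by (rule sum.mono_neutral_right) (auto simp: c_pos)
  then have "c 0 = 0" using Suc.prems(4)[OF t0] by simp
  then show ?case using c_pos by (metis less_Suc_eq_le neq0_conv)
qed simp

section \<open>Finite subrings and prime characteristic\<close>

lemma inverse_in_finite_submonoid:
  fixes R :: "'a::division_ring set"
  assumes fin: "finite R" and one: "1 \<in> R"
    and mult: "\<And>x y. x \<in> R \<Longrightarrow> y \<in> R \<Longrightarrow> x * y \<in> R"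
    and y: "y \<in> R" "y \<noteq> 0"
  shows "inverse y \<in> R"
proof -
  have pow: "y ^ k \<in> R" for k by (induction k) (simp_all add: one mult y(1))
  then have "finite (range (\<lambda>k::nat. y ^ k))" by (intro finite_subset[OF _ fin]) auto
  then have "\<not> inj (\<lambda>k::nat. y ^ k)" using finite_imageD by blast
  then obtain i j :: nat where "i < j" "y ^ i = y ^ j"
    unfolding inj_def by (metis linorder_neqE_nat)
  then have "y ^ i * y ^ (j - i) = y ^ i * 1"
    by (metis le_add_diff_inverse less_imp_le_nat mult_1_right power_add)
  then have "y ^ (j - i) = 1" using y(2) by simp
  moreover have "Suc (j - i - 1) = j - i" using \<open>i < j\<close> by simp
  ultimately have "inverse y = y ^ (j - i - 1)"
    by (intro inverse_unique) (metis power_Suc)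
  then show ?thesis using pow by simp
qed

lemma prime_CHAR_division_ring:
  assumes "0 < CHAR('a::division_ring)"
  shows "prime (CHAR('a))"
proof -
  let ?p = "CHAR('a)"
  have p1: "1 < ?p" using assms CHAR_not_1 by (metis One_nat_def less_one nat_neq_iff)
  show ?thesis unfolding prime_nat_iff
  proof (intro conjI allI impI)
    show "1 < ?p" by (rule p1)
    fix d assume "d dvd ?p"
    then obtain e where e: "?p = d * e" by blast
    have "d * e \<noteq> 0" using e p1 by linarith
    then have "d \<noteq> 0" "e \<noteq> 0" by auto
    have "(of_nat d :: 'a) * of_nat e = 0" using e by (metis of_nat_CHAR of_nat_mult)
    then have "?p dvd d \<or> ?p dvd e" by (simp add: of_nat_eq_0_iff_char_dvd)
    then have "?p \<le> d \<or> ?p \<le> e" using \<open>d \<noteq> 0\<close> \<open>e \<noteq> 0\<close> by (auto dest: dvd_imp_le)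
    moreover have "d \<le> ?p" "e \<le> ?p" using e \<open>d \<noteq> 0\<close> \<open>e \<noteq> 0\<close> by simp_all
    ultimately have "d = ?p \<or> e = ?p" by auto
    then show "d = 1 \<or> d = ?p" using e p1 by auto
  qed
qed

lemma CHAR_pos_if_finite_range_of_nat:
  assumes "finite (range (of_nat :: nat \<Rightarrow> 'a::ring_1))"
  shows "0 < CHAR('a)"
proof (rule ccontr)
  assume "\<not> 0 < CHAR('a)"
  then have "inj (of_nat :: nat \<Rightarrow> 'a)"
    by (intro injI) (metis bot_nat_0.not_eq_extremum dvd_0_left_iff linorder_neqE_nat
      of_nat_eq_iff_char_dvd zero_less_diff)
  with assms show False by (simp add: finite_image_iff)
qed

lemma range_of_nat_eq_image_lessThan_CHAR:
  assumes p: "0 < CHAR('a::ring_1)"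
  shows "range (of_nat :: nat \<Rightarrow> 'a) = of_nat ` {..<CHAR('a)}"
proof
  show "range (of_nat :: nat \<Rightarrow> 'a) \<subseteq> of_nat ` {..<CHAR('a)}"
  proof
    fix y :: 'a assume "y \<in> range of_nat"
    then obtain k where "y = of_nat k" by blast
    also have "(of_nat k :: 'a) = of_nat CHAR('a) * of_nat (k div CHAR('a)) + of_nat (k mod CHAR('a))"
      unfolding of_nat_mult[symmetric] of_nat_add[symmetric] by simp
    finally have "y = of_nat (k mod CHAR('a))" by simp
    moreover have "k mod CHAR('a) < CHAR('a)" using p by simp
    ultimately show "y \<in> of_nat ` {..<CHAR('a)}" by blast
  qed
qed auto

lemma inj_on_of_nat_lessThan_CHAR: "inj_on (of_nat :: nat \<Rightarrow> 'a::ring_1) {..<CHAR('a)}"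
proof (rule inj_onI, rule ccontr)
  fix i j assume ij: "i \<in> {..<CHAR('a)}" "j \<in> {..<CHAR('a)}" "(of_nat i :: 'a) = of_nat j" "i \<noteq> j"
  have "CHAR('a) dvd (max i j - min i j)"
    using ij(3,4) of_nat_eq_iff_char_dvd[of "min i j" "max i j", where 'a='a]
    by (cases "i < j") (auto simp: min_def max_def)
  moreover have "0 < max i j - min i j" "max i j - min i j < CHAR('a)" using ij by auto
  ultimately show False by (auto dest: dvd_imp_le)
qed

lemma card_range_of_nat: "0 < CHAR('a::ring_1) \<Longrightarrow> card (range (of_nat :: nat \<Rightarrow> 'a)) = CHAR('a)"
  by (simp add: range_of_nat_eq_image_lessThan_CHAR card_image inj_on_of_nat_lessThan_CHAR)

lemma division_subring_range_of_nat:
  assumes p: "0 < CHAR('a::division_ring)"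
  shows "division_subring (range (of_nat :: nat \<Rightarrow> 'a))"
proof
  fix x y :: 'a assume "x \<in> range of_nat" "y \<in> range of_nat"
  then obtain i j where ij: "x = of_nat i" "y = of_nat j" by blast
  show "x + y \<in> range of_nat" "x * y \<in> range of_nat"
    unfolding ij by (metis rangeI of_nat_add, metis rangeI of_nat_mult)
next
  fix x :: 'a assume x: "x \<in> range of_nat"
  then obtain i where i: "x = of_nat i" by blast
  have "x + of_nat ((CHAR('a) - 1) * i) = of_nat (CHAR('a) * i)"
    using p by (simp add: i flip: of_nat_add)
  then have "- x = of_nat ((CHAR('a) - 1) * i)" by (simp add: minus_unique)
  then show "- x \<in> range of_nat" by (metis rangeI)
  show "inverse x \<in> range of_nat"
  proof (cases "x = 0")
    case False
    have "finite (range (of_nat :: nat \<Rightarrow> 'a))" using p by (simp add: range_of_nat_eq_image_lessThan_CHAR)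
    then show ?thesis
      by (rule inverse_in_finite_submonoid[OF _ _ _ x False])
        (metis rangeI of_nat_1, auto simp flip: of_nat_mult)
  qed (metis rangeI inverse_zero of_nat_0)
qed (metis rangeI of_nat_0, metis rangeI of_nat_1)

lemma (in division_subring) of_nat_closed: "of_nat k \<in> S"
  by (induction k) (simp_all add: add_closed)

lemma (in division_subring) card_eq_CHAR_power:
  assumes fin: "finite S"
  shows "\<exists>k. card S = CHAR('a) ^ k"
proof -
  have PS: "range of_nat \<subseteq> S" using of_nat_closed by blast
  then have "0 < CHAR('a)" using fin by (intro CHAR_pos_if_finite_range_of_nat) (rule finite_subset)
  then show ?thesis
    using card_left_module_eq_power[OF division_subring_range_of_nat _ _ fin]
      division_subring.left_module_superring[OF division_subring_range_of_nat division_subring_axioms PS]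
      card_range_of_nat finite_subset[OF PS fin]
    by metis
qed

section \<open>Spans of the powers of a root of unity\<close>

lemma conj_power:
  fixes g x :: "'a::division_ring"
  assumes "g \<noteq> 0"
  shows "g * x ^ i * inverse g = (g * x * inverse g) ^ i"
proof (induction i)
  case (Suc i)
  have "g * x ^ Suc i * inverse g = (g * x * inverse g) * (g * x ^ i * inverse g)"
    using assms by (simp add: mult.assoc)
  then show ?case using Suc by simp
qed (use assms in simp)


definition power_span :: "'a::division_ring set \<Rightarrow> 'a \<Rightarrow> nat \<Rightarrow> 'a set" where
  "power_span R x N = {y. \<exists>f. (\<forall>i. f i \<in> R) \<and> y = (\<Sum>i<N. f i * x ^ i)}"

lemma power_spanI: "(\<And>i. f i \<in> R) \<Longrightarrow> y = (\<Sum>i<N. f i * x ^ i) \<Longrightarrow> y \<in> power_span R x N"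
  unfolding power_span_def by blast

locale power_span_ring = division_subring R for R +
  fixes x :: "'a::division_ring" and N :: nat
  assumes root: "x ^ N = 1" and N_pos: "0 < N"
    and normalizes: "k \<in> R \<Longrightarrow> \<exists>k'\<in>R. x * k = k' * x"
begin

abbreviation "Sp \<equiv> power_span R x N"

lemma normalizes_power: "k \<in> R \<Longrightarrow> \<exists>k'\<in>R. x ^ j * k = k' * x ^ j"
proof (induction j arbitrary: k)
  case (Suc j)
  then obtain k' where k': "k' \<in> R" "x ^ j * k = k' * x ^ j" by blast
  obtain k'' where "k'' \<in> R" "x * k' = k'' * x" using normalizes[OF k'(1)] by blast
  then have "x ^ Suc j * k = k'' * x ^ Suc j" using k'(2) by (simp add: mult.assoc) (simp flip: mult.assoc)
  with \<open>k'' \<in> R\<close> show ?case by blast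
qed auto

lemma monomial_in_power_span:
  assumes k: "k \<in> R"
  shows "k * x ^ j \<in> Sp"
proof -
  have "x ^ j = (x ^ N) ^ (j div N) * x ^ (j mod N)"
    by (simp flip: power_mult power_add)
  then have xj: "x ^ j = x ^ (j mod N)" using root by simp
  define f where "f i = (if i = j mod N then k else 0)" for i
  have "(\<Sum>i<N. f i * x ^ i) = (\<Sum>i\<in>{j mod N}. f i * x ^ i)"
    using N_pos by (intro sum.mono_neutral_right) (auto simp: f_def)
  then have "(\<Sum>i<N. f i * x ^ i) = k * x ^ j" by (simp add: f_def xj)
  then show ?thesis using k by (intro power_spanI[of f]) (simp_all add: f_def)
qed

lemma subset_power_span: "R \<subseteq> Sp"
  using monomial_in_power_span[of _ 0] by auto

lemma root_in_power_span: "x \<in> Sp"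
  using monomial_in_power_span[OF one_closed, of 1] by simp

lemma power_span_add_closed: "y \<in> Sp \<Longrightarrow> z \<in> Sp \<Longrightarrow> y + z \<in> Sp"
proof -
  assume "y \<in> Sp" "z \<in> Sp"
  then obtain f g where f: "\<forall>i. f i \<in> R" "y = (\<Sum>i<N. f i * x ^ i)"
    and g: "\<forall>i. g i \<in> R" "z = (\<Sum>i<N. g i * x ^ i)" by (auto simp: power_span_def)
  have "y + z = (\<Sum>i<N. (f i + g i) * x ^ i)" using f g by (simp add: sum.distrib distrib_right)
  then show ?thesis using f g add_closed by (intro power_spanI[of "\<lambda>i. f i + g i"]) auto
qed

lemma power_span_sum_closed: "(\<And>i. i \<in> A \<Longrightarrow> g i \<in> Sp) \<Longrightarrow> sum g A \<in> Sp"
proof (induction A rule: infinite_finite_induct)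
  case (insert a A)
  then have "g a \<in> Sp" "sum g A \<in> Sp" by blast+
  then show ?case unfolding sum.insert[OF insert.hyps] by (rule power_span_add_closed)
qed (use subset_power_span in auto)

lemma power_span_mult_closed: "y \<in> Sp \<Longrightarrow> z \<in> Sp \<Longrightarrow> y * z \<in> Sp"
proof -
  assume "y \<in> Sp" "z \<in> Sp"
  then obtain f g where f: "\<forall>i. f i \<in> R" "y = (\<Sum>i<N. f i * x ^ i)"
    and g: "\<forall>j. g j \<in> R" "z = (\<Sum>j<N. g j * x ^ j)" by (auto simp: power_span_def)
  have "y * z = (\<Sum>i<N. \<Sum>j<N. (f i * x ^ i) * (g j * x ^ j))"
    by (simp only: f(2) g(2) sum_distrib_right) (simp only: sum_distrib_left)
  also have "\<dots> \<in> Sp"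
  proof (intro power_span_sum_closed)
    fix i j
    obtain k' where k': "k' \<in> R" "x ^ i * g j = k' * x ^ i" using normalizes_power g(1) by blast
    have "(f i * x ^ i) * (g j * x ^ j) = (f i * k') * x ^ (i + j)"
      by (simp add: mult.assoc power_add) (simp add: mult.assoc[symmetric] k'(2))
    then show "(f i * x ^ i) * (g j * x ^ j) \<in> Sp" using monomial_in_power_span mult_closed f(1) k'(1) by simp
  qed
  finally show ?thesis .
qed

lemma finite_power_span:
  assumes "finite R"
  shows "finite Sp"
proof -
  have "Sp \<subseteq> (\<lambda>f. \<Sum>i<N. f i * x ^ i) ` (PiE {..<N} (\<lambda>_. R))"
  proof
    fix y assume "y \<in> Sp"
    then obtain f where f: "\<forall>i. f i \<in> R" "y = (\<Sum>i<N. f i * x ^ i)" by (auto simp: power_span_def)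
    then have "y = (\<Sum>i<N. restrict f {..<N} i * x ^ i)" by simp
    moreover have "restrict f {..<N} \<in> PiE {..<N} (\<lambda>_. R)" using f(1) by auto
    ultimately show "y \<in> (\<lambda>f. \<Sum>i<N. f i * x ^ i) ` (PiE {..<N} (\<lambda>_. R))" by blast
  qed
  moreover have "finite (PiE {..<N} (\<lambda>_. R))" using assms by (simp add: finite_PiE)
  ultimately show ?thesis using finite_subset by blast
qed

lemma division_subring_power_span:
  assumes fin: "finite R"
  shows "division_subring Sp"
proof
  show "0 \<in> Sp" "1 \<in> Sp" using subset_power_span by auto
next
  fix y z assume "y \<in> Sp" "z \<in> Sp"
  then show "y + z \<in> Sp" "y * z \<in> Sp" by (simp_all add: power_span_add_closed power_span_mult_closed)
next
  fix y assume y: "y \<in> Sp"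
  have "(- 1) * y \<in> Sp"
    using power_span_mult_closed[OF _ y] subset_power_span uminus_closed[OF one_closed] by blast
  then show "- y \<in> Sp" by simp
  show "inverse y \<in> Sp"
  proof (cases "y = 0")
    case False
    show ?thesis
      by (rule inverse_in_finite_submonoid[OF finite_power_span[OF fin] _ power_span_mult_closed y False])
        (use subset_power_span in auto)
  qed (use subset_power_span in auto)
qed

lemma power_span_power_closed: "y \<in> Sp \<Longrightarrow> y ^ k \<in> Sp"
  by (induction k) (use subset_power_span power_span_mult_closed in auto)

lemma conjugate_in_power_span:
  assumes g: "g \<noteq> 0" and gR: "\<And>k. k \<in> R \<Longrightarrow> g * k = k * g"
    and gx: "g * x * inverse g \<in> Sp" and y: "y \<in> Sp"
  shows "g * y * inverse g \<in> Sp"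
proof -
  obtain f where f: "\<forall>i. f i \<in> R" "y = (\<Sum>i<N. f i * x ^ i)" using y by (auto simp: power_span_def)
  have "g * (f i * x ^ i) * inverse g = f i * (g * x ^ i * inverse g)" for i
    using gR[of "f i"] f(1) by (simp add: mult.assoc[symmetric])
  then have "g * (f i * x ^ i) * inverse g = f i * (g * x * inverse g) ^ i" for i
    by (simp add: conj_power[OF g])
  then have "g * y * inverse g = (\<Sum>i<N. f i * (g * x * inverse g) ^ i)"
    by (simp add: f(2) sum_distrib_left sum_distrib_right)
  also have "\<dots> \<in> Sp"
  proof (intro power_span_sum_closed)
    fix i
    show "f i * (g * x * inverse g) ^ i \<in> Sp"
      using f(1) subset_power_span by (intro power_span_mult_closed power_span_power_closed[OF gx]) auto
  qed
  finally show ?thesis .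
qed

lemma commute_power_span:
  assumes "\<And>k. k \<in> R \<Longrightarrow> k * y = y * k" and "x * y = y * x" and "z \<in> Sp"
  shows "z * y = y * z"
proof -
  obtain f where f: "\<forall>i. f i \<in> R" "z = (\<Sum>i<N. f i * x ^ i)" using assms(3) by (auto simp: power_span_def)
  have "x ^ i * y = y * x ^ i" for i by (rule power_commuting_commutes[OF assms(2)])
  then have "f i * x ^ i * y = y * (f i * x ^ i)" for i
    using assms(1)[of "f i"] f(1) by (simp add: mult.assoc) (simp flip: mult.assoc)
  then show ?thesis unfolding f(2) sum_distrib_left sum_distrib_right by simp
qed

lemma power_span_commutative:
  assumes "R \<subseteq> center UNIV" and "s \<in> Sp" "t \<in> Sp"
  shows "s * t = t * s"
proof -
  have Rc: "k * y = y * k" if "k \<in> R" for k y using assms(1) that by (auto simp: center_def)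
  have xSp: "z * x = x * z" if "z \<in> Sp" for z
    by (rule commute_power_span) (use Rc that in simp_all)
  show ?thesis
    by (rule commute_power_span) (use Rc xSp[OF assms(3), symmetric] assms(2) in simp_all)
qed

end

lemma power_span_ring_center:
  assumes "x ^ N = 1" "0 < N"
  shows "power_span_ring (center UNIV) x N"
proof (intro power_span_ring.intro power_span_ring_axioms.intro)
  show "division_subring (center UNIV :: 'a set)"
    by (rule division_subring.division_subring_center[OF division_subring_UNIV])
  fix k :: 'a assume "k \<in> center UNIV"
  then show "\<exists>k'\<in>center UNIV. x * k = k' * x" by (intro bexI[of _ k]) (simp_all add: center_UNIV_iff)
qed (use assms in simp_all)

section \<open>Division rings with central \<open>n\<close>-th powers: infinite centre\<close>

lemma ad_power_add_central:
  assumes t: "t \<in> center UNIV"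
  shows "ad ((w + t) ^ m) y = (\<Sum>k\<le>m. t ^ k * (of_nat (m choose k) * ad (w ^ (m - k)) y))"
proof -
  have tk: "t ^ k \<in> center UNIV" for k by (rule center_UNIV_power[OF t])
  have "w * t = t * w" using t by (simp add: center_UNIV_iff)
  have "of_nat (m choose k) * (w ^ (m - k) * t ^ k) = t ^ k * of_nat (m choose k) * w ^ (m - k)" for k
  proof -
    have "w ^ (m - k) * t ^ k = t ^ k * w ^ (m - k)" using tk by (simp add: center_UNIV_iff)
    then show ?thesis by (simp add: mult.assoc[symmetric] mult_of_nat_commute)
  qed
  then have "(w + t) ^ m = (\<Sum>k\<le>m. t ^ k * of_nat (m choose k) * w ^ (m - k))"
    by (simp add: commuting_binomial[OF \<open>w * t = t * w\<close>])
  then have "ad ((w + t) ^ m) y = (\<Sum>k\<le>m. ad (t ^ k * (of_nat (m choose k) * w ^ (m - k))) y)"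
    by (simp add: ad_sum_left mult.assoc)
  also have "\<dots> = (\<Sum>k\<le>m. t ^ k * (of_nat (m choose k) * ad (w ^ (m - k)) y))"
    by (intro sum.cong refl) (simp add: ad_central_mult_left tk of_nat_in_center_UNIV)
  finally show ?thesis .
qed

lemma inj_on_power_center:
  fixes q :: nat
  assumes frob: "\<And>a b :: 'a::division_ring. a * b = b * a \<Longrightarrow> (a + b) ^ q = a ^ q + b ^ q"
  shows "inj_on (\<lambda>c. c ^ q) (center (UNIV :: 'a set))"
proof (rule inj_onI)
  fix c d :: 'a assume cd: "c \<in> center UNIV" "d \<in> center UNIV" "c ^ q = d ^ q"
  have "0 < q"
  proof (rule ccontr)
    assume "\<not> 0 < q"
    then have "(1::'a) = 1 + 1" using frob[of 0 0] by simp
    then show False using add_cancel_right_right[of "1::'a" 1] by simp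
  qed
  then have "0 = d ^ q + (- d) ^ q" using frob[of d "- d"] by (simp add: zero_power)
  moreover have "c * - d = - d * c" using cd(1) by (simp add: center_UNIV_iff)
  then have "(c + - d) ^ q = c ^ q + (- d) ^ q" by (rule frob)
  ultimately have "(c - d) ^ q = 0" using cd(3) by (simp add: add_eq_0_iff)
  then show "c = d" by simp
qed

lemma power_central_if_infinite_center:
  fixes q m :: nat and x :: "'a::division_ring"
  assumes inf: "infinite (center (UNIV :: 'a set))"
    and m: "(of_nat m :: 'a) \<noteq> 0"
    and frob: "\<And>a b :: 'a. a * b = b * a \<Longrightarrow> (a + b) ^ q = a ^ q + b ^ q"
    and central: "\<And>x :: 'a. x ^ (q * m) \<in> center UNIV"
  shows "x ^ q \<in> center UNIV"
proof -
  let ?Z = "center (UNIV :: 'a set)"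
  have "0 < m" using m by (cases m) simp_all
  have Zc: "z * y = y * z" if "z \<in> ?Z" for z y using that by (simp add: center_UNIV_iff)
  have "infinite ((\<lambda>c. c ^ q) ` ?Z)" using inf inj_on_power_center[OF frob] by (simp add: finite_image_iff)
  then obtain T where T: "finite T" "card T = Suc m" "T \<subseteq> (\<lambda>c. c ^ q) ` ?Z"
    using infinite_arbitrarily_large by blast
  have TZ: "T \<subseteq> ?Z" using T(3) center_UNIV_power by blast
  have "ad (x ^ q) y = 0" for y
  proof -
    define w where "w = x ^ q"
    define cf where "cf k = of_nat (m choose k) * ad (w ^ (m - k)) y" for k
    have "(\<Sum>k<Suc m. t ^ k * cf k) = 0" if "t \<in> T" for t
    proof -
      obtain c where c: "c \<in> ?Z" "t = c ^ q" using \<open>t \<in> T\<close> T(3) by blast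
      have "(x + c) ^ (q * m) = (w + t) ^ m"
        using frob[of x c] Zc[OF c(1), of x] c(2) by (simp add: w_def power_mult)
      then have "(\<Sum>k<Suc m. t ^ k * cf k) = ad ((x + c) ^ (q * m)) y"
        using TZ \<open>t \<in> T\<close> by (auto simp: ad_power_add_central cf_def lessThan_Suc_atMost)
      also have "\<dots> = 0" using central[of "x + c"] by (simp add: ad_eq_0_iff center_UNIV_iff)
      finally show ?thesis .
    qed
    then have "\<forall>k<Suc m. cf k = 0"
      using T(1,2) TZ Zc by (intro commuting_poly_eq_0_imp_coeffs_eq_0[of T]) auto
    then have "cf (m - 1) = 0" using \<open>0 < m\<close> by simp
    moreover have "m - (m - 1) = 1" using \<open>0 < m\<close> by simp
    moreover have "m choose (m - 1) = m" using binomial_symmetric[of "m - 1" m] \<open>0 < m\<close> by simp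
    ultimately have "of_nat m * ad w y = 0" by (simp add: cf_def)
    then show ?thesis using m by (simp add: w_def)
  qed
  then show ?thesis by (simp add: center_UNIV_iff ad_eq_0_iff)
qed

lemma ad_eq_1_if_ad_nilpotent:
  fixes a :: "'a::division_ring"
  assumes nil: "(ad a ^^ k) y = 0" and y: "ad a y \<noteq> 0"
  obtains z where "ad a z = 1"
proof -
  have "\<exists>u. ad a u \<noteq> 0 \<and> ad a (ad a u) = 0"
    using nil y
  proof (induction k arbitrary: y)
    case 0
    then show ?case by (simp add: ad_def)
  next
    case (Suc k)
    show ?case
    proof (cases "ad a (ad a y) = 0")
      case False
      moreover have "(ad a ^^ k) (ad a y) = 0"
        using Suc.prems(1) by (simp add: funpow_Suc_right del: funpow.simps)
      ultimately show ?thesis using Suc.IH by blast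
    qed (use Suc.prems in blast)
  qed
  then obtain u where u: "ad a u \<noteq> 0" "ad a (ad a u) = 0" by blast
  define w where "w = ad a u"
  have "a * inverse w = inverse w * a"
    using u(2) mult_commute_imp_mult_inverse_commute[of w a] by (simp add: w_def ad_eq_0_iff)
  then have "ad a (inverse w * u) = inverse w * ad a u"
    by (simp add: ad_def right_diff_distrib flip: mult.assoc)
  also have "\<dots> = 1" using u(1) by (simp add: w_def)
  finally show ?thesis by (rule that)
qed

text \<open>A noncentral \<open>a\<close> admits \<open>z\<close> with \<open>[a, z] = 1\<close>, and then \<open>v = a z\<close> satisfies \<open>[v, z] = z\<close>,
  contradicting the nilpotence of \<open>ad v\<close>.\<close>

lemma commutative_if_CHAR_power_central:
  fixes x y :: "'a::division_ring"
  assumes p: "prime CHAR('a)" and central: "\<And>x :: 'a. x ^ (CHAR('a) ^ e) \<in> center UNIV"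
  shows "x * y = y * x"
proof (rule ccontr)
  have nil: "(ad v ^^ (CHAR('a) ^ e)) z = 0" for v z :: 'a
    using central[of v] by (simp add: ad_funpow_CHAR_power[OF p] ad_eq_0_iff center_UNIV_iff)
  assume "x * y \<noteq> y * x"
  then have "ad x y \<noteq> 0" by (simp add: ad_eq_0_iff)
  then obtain z where z: "ad x z = 1" using ad_eq_1_if_ad_nilpotent[OF nil] by blast
  define v where "v = x * z"
  have "ad v z = ad x z * z" by (simp add: v_def ad_def left_diff_distrib mult.assoc)
  then have "ad v z = z" using z by simp
  then have "(ad v ^^ k) z = z" for k by (induction k) simp_all
  then have "z = 0" using nil[of v z] by simp
  then show False using z by (simp add: ad_def)
qed

lemma CHAR_power_factorization:
  assumes n: "0 < n"
  obtains e m where "n = CHAR('a::division_ring) ^ e * m" and "(of_nat m :: 'a) \<noteq> 0"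
    and "0 < e \<Longrightarrow> prime CHAR('a)"
proof (cases "CHAR('a) = 0")
  case True
  then show ?thesis using that[of 0 n] n by (simp add: of_nat_eq_0_iff_char_dvd)
next
  case False
  then have p: "prime CHAR('a)" by (intro prime_CHAR_division_ring) simp
  obtain m where m: "n = CHAR('a) ^ multiplicity CHAR('a) n * m" "\<not> CHAR('a) dvd m"
    using multiplicity_decompose'[of n "CHAR('a)"] n p not_prime_unit by auto
  then show ?thesis using that p by (simp add: of_nat_eq_0_iff_char_dvd)
qed

theorem commutative_if_power_central_infinite_center:
  fixes x y :: "'a::division_ring"
  assumes n: "0 < n" and central: "\<And>x :: 'a. x ^ n \<in> center UNIV"
    and inf: "infinite (center (UNIV :: 'a set))"
  shows "x * y = y * x"
proof -
  obtain e m where nem: "n = CHAR('a) ^ e * m" and m: "(of_nat m :: 'a) \<noteq> 0"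
    and p: "0 < e \<Longrightarrow> prime CHAR('a)"
    using CHAR_power_factorization[OF n] by blast
  have frob: "(a + b) ^ (CHAR('a) ^ e) = a ^ (CHAR('a) ^ e) + b ^ (CHAR('a) ^ e)"
    if "a * b = b * a" for a b :: 'a
  proof (cases "e = 0")
    case False
    then show ?thesis using commuting_add_power_CHAR_power[OF p that] by simp
  qed simp
  have central_q: "x ^ (CHAR('a) ^ e) \<in> center UNIV" for x :: 'a
    using power_central_if_infinite_center[OF inf m frob] central nem by blast
  show ?thesis
  proof (cases "e = 0")
    case True
    then show ?thesis using central_q[of x] by (simp add: center_UNIV_iff)
  next
    case False
    then show ?thesis using commutative_if_CHAR_power_central[OF p central_q] by simp
  qed
qed

section \<open>Division rings with central \<open>n\<close>-th powers: finite centre\<close>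

text \<open>Herstein's argument: for \<open>u = [a, b] \<noteq> 0\<close> and \<open>t \<in> K - {0}\<close> the vector
  \<open>v = \<Sum>\<^sub>i t\<^sup>i (ad a)\<^sup>i u\<close> satisfies \<open>t [a, v] = v\<close>, and by Vandermonde \<open>v \<noteq> 0\<close> for some \<open>t\<close>.\<close>

lemma ad_eigenvector:
  fixes a b :: "'a::division_ring"
  assumes K: "division_subring K" "finite K" and comm: "\<And>s t. s \<in> K \<Longrightarrow> t \<in> K \<Longrightarrow> s * t = t * s"
    and a: "a \<in> K" and frob: "ad a ^^ card K = ad a" and b: "ad a b \<noteq> 0"
  obtains e c where "e \<noteq> 0" "c \<in> K" "c \<noteq> 0" "ad a e = c * e"
proof -
  interpret K: division_subring K by (fact K(1))
  define E where "E = card K - 1"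
  define u where "u = ad a b"
  define v where "v t = (\<Sum>i<E. t ^ i * (ad a ^^ i) u)" for t
  have card_K: "card K = Suc E" using K.card_ge_2[OF K(2)] by (simp add: E_def)
  have "(ad a ^^ E) u = (ad a ^^ Suc E) b" by (simp add: u_def funpow_Suc_right del: funpow.simps)
  also have "ad a ^^ Suc E = ad a" using frob by (simp only: card_K)
  finally have uE: "(ad a ^^ E) u = u" by (simp add: u_def)
  have linear: "ad a (t * w) = t * ad a w" if "t \<in> K" for t w
    using comm[OF a that] by (simp add: ad_def right_diff_distrib mult.assoc[symmetric])
  have eigen: "t * ad a (v t) = v t" if t: "t \<in> K" "t \<noteq> 0" for t
  proof -
    define g where "g i = t ^ i * (ad a ^^ i) u" for i
    have "t * ad a (v t) = (\<Sum>i<E. g (Suc i))"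
      unfolding v_def ad_sum_right sum_distrib_left
      by (intro sum.cong refl) (simp add: g_def linear K.power_closed t mult.assoc)
    also have "\<dots> = (\<Sum>i<E. g i) + g E - g 0"
      using sum.lessThan_Suc_shift[of g E] sum.lessThan_Suc[of g E] by (simp add: algebra_simps)
    also have "g E = g 0"
      using K.power_card_minus_1_eq_1[OF K(2) comm t] uE by (simp add: g_def E_def)
    finally show ?thesis by (simp add: v_def g_def)
  qed
  have "\<exists>t. t \<in> K \<and> t \<noteq> 0 \<and> v t \<noteq> 0"
  proof (rule ccontr)
    assume "\<nexists>t. t \<in> K \<and> t \<noteq> 0 \<and> v t \<noteq> 0"
    then have "\<forall>i<E. (ad a ^^ i) u = 0"
      using K(2) comm card_K
      by (intro commuting_poly_eq_0_imp_coeffs_eq_0[of "K - {0}"]) (auto simp: v_def card_Diff_singleton)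
    moreover have "0 < E" using card_K K.card_ge_2[OF K(2)] by simp
    ultimately have "u = 0" by (metis funpow_0)
    with b show False by (simp add: u_def)
  qed
  then obtain t where t: "t \<in> K" "t \<noteq> 0" "v t \<noteq> 0" by blast
  have "ad a (v t) = inverse t * v t"
    using eigen[OF t(1,2)] t(2) by (metis nonzero_inverse_mult_cancel_left)
  then show ?thesis using t K.inverse_closed by (intro that[of "v t" "inverse t"]) simp_all
qed

lemma finite_noncommutative_division_subring:
  fixes a b :: "'a::division_ring"
  assumes unit: "\<And>u :: 'a. u \<noteq> 0 \<Longrightarrow> u ^ N = 1" and N: "0 < N"
    and fin: "finite (center (UNIV :: 'a set))" and ab: "a * b \<noteq> b * a"
  obtains S e where "division_subring S" "finite S" "a \<in> S" "e \<in> S" "a * e \<noteq> e * a"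
proof -
  let ?Z = "center (UNIV :: 'a set)"
  have "a \<noteq> 0" using ab by auto
  interpret A: power_span_ring ?Z a N using power_span_ring_center unit[OF \<open>a \<noteq> 0\<close>] N by blast
  define K where "K = power_span ?Z a N"
  interpret K: division_subring K unfolding K_def by (rule A.division_subring_power_span[OF fin])
  have finK: "finite K" unfolding K_def by (rule A.finite_power_span[OF fin])
  have aK: "a \<in> K" unfolding K_def by (rule A.root_in_power_span)
  have Kcomm: "s * t = t * s" if "s \<in> K" "t \<in> K" for s t
    using A.power_span_commutative that by (simp add: K_def)
  have "range of_nat \<subseteq> ?Z" using of_nat_in_center_UNIV by blast
  then have p: "prime CHAR('a)"
    using fin by (intro prime_CHAR_division_ring CHAR_pos_if_finite_range_of_nat) (rule finite_subset)
  obtain k where card_K: "card K = CHAR('a) ^ k" using K.card_eq_CHAR_power[OF finK] by blast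
  have "ad a ^^ card K = ad a"
    using K.power_card_eq_self[OF finK Kcomm aK] by (simp add: card_K ad_funpow_CHAR_power[OF p])
  moreover have "ad a b \<noteq> 0" using ab by (simp add: ad_eq_0_iff)
  ultimately obtain e c where e: "e \<noteq> 0" "c \<in> K" "c \<noteq> 0" "ad a e = c * e"
    using ad_eigenvector[OF K.division_subring_axioms finK Kcomm aK] by blast
  have "e * a = (a - c) * e" using e(4) by (simp add: ad_def algebra_simps)
  then have ea: "e * a * inverse e = a - c" using e(1) by (simp add: mult.assoc)
  have eZ: "e * k = k * e" if "k \<in> ?Z" for k using that by (simp add: center_UNIV_iff)
  have conj: "e * z * inverse e \<in> K" if "z \<in> K" for z
    unfolding K_def
    by (rule A.conjugate_in_power_span[OF e(1) eZ])
      (use ea K.diff_closed[OF aK e(2)] that in \<open>simp_all add: K_def\<close>)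
  interpret E: power_span_ring K e N
  proof (intro power_span_ring.intro[OF K.division_subring_axioms] power_span_ring_axioms.intro)
    fix z assume "z \<in> K"
    then show "\<exists>z'\<in>K. e * z = z' * e"
      using conj e(1) by (intro bexI[of _ "e * z * inverse e"]) (simp_all add: mult.assoc)
  qed (simp_all add: unit e(1) N)
  show ?thesis
  proof (rule that)
    show "division_subring (power_span K e N)" by (rule E.division_subring_power_span[OF finK])
    show "finite (power_span K e N)" by (rule E.finite_power_span[OF finK])
    show "a \<in> power_span K e N" using E.subset_power_span aK by blast
    show "e \<in> power_span K e N" by (rule E.root_in_power_span)
    show "a * e \<noteq> e * a" using e by (simp flip: ad_eq_0_iff)
  qed
qed

theorem commutative_if_power_central_finite_center:
  fixes x y :: "'a::division_ring"
  assumes n: "0 < n" and central: "\<And>x :: 'a. x ^ n \<in> center UNIV"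
    and fin: "finite (center (UNIV :: 'a set))"
  shows "x * y = y * x"
proof (rule ccontr)
  assume xy: "x * y \<noteq> y * x"
  let ?Z = "center (UNIV :: 'a set)"
  interpret Z: division_subring ?Z by (rule division_subring.division_subring_center[OF division_subring_UNIV])
  define N where "N = n * (card ?Z - 1)"
  have "0 < N" using n Z.card_ge_2[OF fin] by (simp add: N_def)
  have "u ^ N = 1" if "u \<noteq> 0" for u :: 'a
  proof -
    have "(u ^ n) ^ (card ?Z - 1) = 1"
    proof (rule Z.power_card_minus_1_eq_1[OF fin])
      show "s * t = t * s" if "s \<in> ?Z" "t \<in> ?Z" for s t using that(1) unfolding center_UNIV_iff by blast
    qed (use central[of u] that in simp_all)
    then show ?thesis by (simp add: N_def power_mult)
  qed
  then obtain S e where S: "division_subring S" "finite S" and "x \<in> S" "e \<in> S" "x * e \<noteq> e * x"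
    using finite_noncommutative_division_subring[OF _ \<open>0 < N\<close> fin xy] by blast
  moreover have "x * e = e * x" by (rule division_subring.wedderburn[OF S]) fact+
  ultimately show False by simp
qed

theorem commutative_if_power_central:
  fixes x y :: "'a::division_ring"
  assumes "0 < n" and "\<And>x :: 'a. x ^ n \<in> center UNIV"
  shows "x * y = y * x"
proof (cases "finite (center (UNIV :: 'a set))")
  case True
  then show ?thesis by (rule commutative_if_power_central_finite_center[OF assms])
next
  case False
  then show ?thesis by (rule commutative_if_power_central_infinite_center[OF assms])
qed

lemma power_central_if_powers_swap:
  fixes x :: "'a::division_ring"
  assumes swap: "\<And>\<alpha> \<beta> :: 'a. (\<alpha> * \<beta>) ^ n = (\<beta> * \<alpha>) ^ n"
  shows "x ^ n \<in> center UNIV"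
  unfolding center_UNIV_iff
proof
  fix y :: 'a
  show "x ^ n * y = y * x ^ n"
  proof (cases "y = 0")
    case False
    have "x ^ n = (y * (x * inverse y)) ^ n" using swap[of "x * inverse y" y] False by (simp add: mult.assoc)
    also have "\<dots> = y * x ^ n * inverse y" using conj_power[OF False, of x n] by (simp add: mult.assoc)
    finally have "x ^ n * y = y * x ^ n * inverse y * y" by (rule arg_cong)
    then show ?thesis using False by (simp add: mult.assoc)
  qed simp
qed

theorem theorem2p1:
  fixes smul :: "'f::field \<Rightarrow> 'a::division_ring \<Rightarrow> 'a"
    and n :: nat
  assumes "algebra_over smul"
    and "\<not> (\<forall>x y :: 'a. x * y = y * x)"
    and "n > 0"
  shows "\<exists>\<alpha> \<beta> :: 'a. (\<alpha> * \<beta>) ^ n \<noteq> (\<beta> * \<alpha>) ^ n"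
proof (rule ccontr)
  assume "\<not> (\<exists>\<alpha> \<beta> :: 'a. (\<alpha> * \<beta>) ^ n \<noteq> (\<beta> * \<alpha>) ^ n)"
  then have "x ^ n \<in> center UNIV" for x :: 'a by (intro power_central_if_powers_swap) blast
  then have "x * y = y * x" for x y :: 'a using commutative_if_power_central[OF \<open>n > 0\<close>] by blast
  with assms(2) show False by blast
qed

end
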